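(* For every integer $k\ge2$, the independent user partition multicast scheme is optimal for the $(k,2)$-GIC problem (defined in the context), i.e. $\beta_{IUPM}=\beta$, where $\beta$ is the optimal broadcast rate of that problem.
   Context: GIC problem: there are $m$ packets $x_1,\dots,x_m$, each a binary string of length $t$; for each $i\in[m]$ there is a nonempty set $U_i=\{u_i^1,\dots,u_i^{|U_i|}\}$ of users demanding $x_i$, $U=\bigcup_iU_i$; user $u_i^j$ knows the packets $x_{i'}$, $i'\in A_i^j\subseteq[m]\setminus\{i\}$. An index code of length $r$ for packet length $t$ is an encoder $\phi:(\{0,1\}^t)^m\to\{0,1\}^r$ with decoders $\psi_i^j$ recovering $x_i$ from $\phi(x_1,\dots,x_m)$ and $(x_{i'})_{i'\in A_i^j}$ for all packet values; $\beta=\inf_t\inf r/t$. IUPM rate: for a partition of $U$ into nonempty disjoint sets $W_1,\dots,W_h$ ($1\le h\le m$), let $Y_e=\{i:u_i^j\in W_e\text{ for some }j\}$, $c_e=\min\{|A_i^j\cap Y_e|:u_i^j\in W_e\}$, $b_e=|Y_e|-c_e$. Over a field $\mathbb F=GF(2^s)$ (packets viewed as vectors over $\mathbb F$, combinations componentwise), a valid coefficient choice gives, for each $e$, $b_e$ vectors $\alpha\in\mathbb F^m$ supported on $Y_e$ such that each user $u_i^j\in W_e$ can recover $x_i$ from the combinations $\sum_{i'}\alpha_{i'}x_{i'}$ and its side information. $\mathbf N$ is the matrix of all these vectors as rows; the IUPM rate of the partition is the minimum of $\operatorname{rank}\mathbf N$ over $s$ and valid choices, and $\beta_{IUPM}$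 is its minimum over all user partitions. The $(k,2)$-GIC problem: $m=k(k-1)/2$, $U_i=\{u_i^1,u_i^2\}$ for all $i$. For $l\in[k]$: $I_l^1=\{(l-1)k+a-\tfrac{l(l-1)}{2}: a=1,\dots,k-l\}$ ($l\ne k$), $I_k^1=\emptyset$; $I_l^2=\{(a-1)k+l-\tfrac{a(a+1)}{2}: a=1,\dots,l-1\}$ ($l\ne1$), $I_1^2=\emptyset$; $I_l=I_l^1\cup I_l^2$. User $u_i^j$ has $A_i^j=I_l\setminus\{i\}$ where $l$ is the index with $i\in I_l^j$. *)

theory Defs
  imports "HOL-Algebra.Ring" "HOL-Library.Disjoint_Sets" Complex_Main
begin

text \<open>A GIC problem is given by the number m of packets (indexed 1..m), the number
  nU i of users demanding packet i (users u_i^j, j = 1..nU i) and the side-information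
  sets A i j (subsets of {1..m} - {i}).\<close>

definition gic_users :: "nat \<Rightarrow> (nat \<Rightarrow> nat) \<Rightarrow> (nat \<times> nat) set" where
  "gic_users m nU = {(i, j). i \<in> {1..m} \<and> j \<in> {1..nU i}}"

text \<open>Packets of length t: x i b is bit b of packet i; canonical form (False outside range).\<close>
definition packet_space :: "nat \<Rightarrow> nat \<Rightarrow> (nat \<Rightarrow> nat \<Rightarrow> bool) set" where
  "packet_space m t = {x. \<forall>i b. (i \<notin> {1..m} \<or> t \<le> b) \<longrightarrow> \<not> x i b}"

definition side_info :: "nat set \<Rightarrow> (nat \<Rightarrow> nat \<Rightarrow> bool) \<Rightarrow> (nat \<Rightarrow> nat \<Rightarrow> bool)" where
  "side_info S x = (\<lambda>i b. if i \<in> S then x i b else False)"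

definition has_index_code ::
  "nat \<Rightarrow> (nat \<Rightarrow> nat) \<Rightarrow> (nat \<Rightarrow> nat \<Rightarrow> nat set) \<Rightarrow> nat \<Rightarrow> nat \<Rightarrow> bool" where
  "has_index_code m nU A t r \<longleftrightarrow>
     (\<exists>(\<phi> :: (nat \<Rightarrow> nat \<Rightarrow> bool) \<Rightarrow> nat \<Rightarrow> bool)
        (\<psi> :: nat \<Rightarrow> nat \<Rightarrow> (nat \<Rightarrow> bool) \<Rightarrow> (nat \<Rightarrow> nat \<Rightarrow> bool) \<Rightarrow> nat \<Rightarrow> bool).
        (\<forall>x \<in> packet_space m t. \<forall>b. r \<le> b \<longrightarrow> \<not> \<phi> x b) \<and>
        (\<forall>(i, j) \<in> gic_users m nU. \<forall>x \<in> packet_space m t. \<forall>b < t.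
            \<psi> i j (\<phi> x) (side_info (A i j) x) b = x i b))"

definition gic_beta :: "nat \<Rightarrow> (nat \<Rightarrow> nat) \<Rightarrow> (nat \<Rightarrow> nat \<Rightarrow> nat set) \<Rightarrow> real" where
  "gic_beta m nU A = Inf {real r / real t | r t. 0 < t \<and> has_index_code m nU A t r}"

definition part_Y :: "(nat \<times> nat) set \<Rightarrow> nat set" where
  "part_Y W = {i. \<exists>j. (i, j) \<in> W}"

definition part_c :: "(nat \<Rightarrow> nat \<Rightarrow> nat set) \<Rightarrow> (nat \<times> nat) set \<Rightarrow> nat" where
  "part_c A W = Min {card (A i j \<inter> part_Y W) | i j. (i, j) \<in> W}"

definition part_b :: "(nat \<Rightarrow> nat \<Rightarrow> nat set) \<Rightarrow> (nat \<times> nat) set \<Rightarrow> nat" where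
  "part_b A W = card (part_Y W) - part_c A W"

text \<open>Valid coefficient choice over the field R: for each group W of the partition P,
  vectors alpha W k (k < b_W), alpha W k i the coefficient of packet i, supported on Y_W,
  such that every user of W can recover its packet from the b_W combinations and its
  side information (packets are elements of the field; combinations act componentwise,
  so this is the per-component condition).\<close>
definition valid_choice ::
  "'c ring \<Rightarrow> nat \<Rightarrow> (nat \<Rightarrow> nat \<Rightarrow> nat set) \<Rightarrow> (nat \<times> nat) set set
     \<Rightarrow> ((nat \<times> nat) set \<Rightarrow> nat \<Rightarrow> nat \<Rightarrow> 'c) \<Rightarrow> bool" where
  "valid_choice R m A P \<alpha> \<longleftrightarrow>
     (\<forall>W \<in> P. \<forall>k < part_b A W. \<forall>i.
        \<alpha> W k i \<in> carrier R \<and> (i \<notin> part_Y W \<longrightarrow> \<alpha> W k i = \<zero>\<^bsub>R\<^esub>)) \<and>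
     (\<forall>W \<in> P. \<forall>(i, j) \<in> W. \<exists>\<psi> :: (nat \<Rightarrow> 'c) \<Rightarrow> (nat \<Rightarrow> 'c) \<Rightarrow> 'c.
        \<forall>x :: nat \<Rightarrow> 'c. (\<forall>i'. x i' \<in> carrier R) \<longrightarrow>
          \<psi> (\<lambda>k. if k < part_b A W
                   then finsum R (\<lambda>i'. \<alpha> W k i' \<otimes>\<^bsub>R\<^esub> x i') {1..m} else \<zero>\<^bsub>R\<^esub>)
            (\<lambda>i'. if i' \<in> A i j then x i' else \<zero>\<^bsub>R\<^esub>) = x i)"

definition choice_rows ::
  "(nat \<Rightarrow> nat \<Rightarrow> nat set) \<Rightarrow> (nat \<times> nat) set set
     \<Rightarrow> ((nat \<times> nat) set \<Rightarrow> nat \<Rightarrow> nat \<Rightarrow> 'c) \<Rightarrow> (nat \<Rightarrow> 'c) set" where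
  "choice_rows A P \<alpha> = {\<alpha> W k | W k. W \<in> P \<and> k < part_b A W}"

definition lin_indep_vecs :: "'c ring \<Rightarrow> nat \<Rightarrow> (nat \<Rightarrow> 'c) set \<Rightarrow> bool" where
  "lin_indep_vecs R m S \<longleftrightarrow> finite S \<and>
     (\<forall>c. (\<forall>v \<in> S. c v \<in> carrier R) \<longrightarrow>
          (\<forall>i \<in> {1..m}. finsum R (\<lambda>v. c v \<otimes>\<^bsub>R\<^esub> v i) S = \<zero>\<^bsub>R\<^esub>) \<longrightarrow>
          (\<forall>v \<in> S. c v = \<zero>\<^bsub>R\<^esub>))"

definition vec_rank :: "'c ring \<Rightarrow> nat \<Rightarrow> (nat \<Rightarrow> 'c) set \<Rightarrow> nat" where
  "vec_rank R m S = Max {card T | T. T \<subseteq> S \<and> lin_indep_vecs R m T}"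

text \<open>IUPM rate of a user partition: minimum of rank N over s and valid choices over
  GF(2^s) (any field with 2^s elements, s \<ge> 1, represented with carrier in nat).\<close>
definition iupm_rate ::
  "nat \<Rightarrow> (nat \<Rightarrow> nat \<Rightarrow> nat set) \<Rightarrow> (nat \<times> nat) set set \<Rightarrow> nat" where
  "iupm_rate m A P = Inf {vec_rank R m (choice_rows A P \<alpha>) | (R :: nat ring) s \<alpha>.
      field R \<and> 1 \<le> s \<and> card (carrier R) = 2 ^ s \<and> valid_choice R m A P \<alpha>}"

definition beta_iupm :: "nat \<Rightarrow> (nat \<Rightarrow> nat) \<Rightarrow> (nat \<Rightarrow> nat \<Rightarrow> nat set) \<Rightarrow> nat" where
  "beta_iupm m nU A = Inf {iupm_rate m A P | P.
      partition_on (gic_users m nU) P \<and> card P \<le> m}"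

definition k2_m :: "nat \<Rightarrow> nat" where
  "k2_m k = k * (k - 1) div 2"

definition k2_I1 :: "nat \<Rightarrow> nat \<Rightarrow> nat set" where
  "k2_I1 k l = (if l = k then {} else
     {(l - 1) * k + a - l * (l - 1) div 2 | a. 1 \<le> a \<and> a \<le> k - l})"

definition k2_I2 :: "nat \<Rightarrow> nat \<Rightarrow> nat set" where
  "k2_I2 k l = (if l = 1 then {} else
     {(a - 1) * k + l - a * (a + 1) div 2 | a. 1 \<le> a \<and> a \<le> l - 1})"

definition k2_Ij :: "nat \<Rightarrow> nat \<Rightarrow> nat \<Rightarrow> nat set" where
  "k2_Ij j k l = (if j = 1 then k2_I1 k l else k2_I2 k l)"

definition k2_I :: "nat \<Rightarrow> nat \<Rightarrow> nat set" where
  "k2_I k l = k2_I1 k l \<union> k2_I2 k l"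

definition k2_nU :: "nat \<Rightarrow> nat" where
  "k2_nU i = 2"

definition k2_A :: "nat \<Rightarrow> nat \<Rightarrow> nat \<Rightarrow> nat set" where
  "k2_A k i j = k2_I k (THE l. l \<in> {1..k} \<and> i \<in> k2_Ij j k l) - {i}"

end

theory Submission
  imports Defs
begin

definition gf2 :: "nat ring" where
  "gf2 = \<lparr>carrier = {0, 1}, mult = (*), one = 1, zero = 0, add = (\<lambda>a b. (a + b) mod 2)\<rparr>"

lemma gf2_simps [simp]:
  "carrier gf2 = {0, 1}" "mult gf2 a b = a * b" "one gf2 = 1" "zero gf2 = 0"
  "add gf2 a b = (a + b) mod 2"
  by (simp_all add: gf2_def)

lemma gf2_cring: "cring gf2"
proof (rule cringI)
  show "abelian_group gf2"
    by (rule abelian_groupI) (auto simp: mod_add_left_eq mod_add_right_eq add.assoc)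
  show "comm_monoid gf2"
    by (rule comm_monoidI) auto
qed (auto simp: distrib_right)

lemma gf2_field: "field gf2"
  by (rule cring.cring_fieldI2[OF gf2_cring]) auto

lemma gf2_finsum:
  assumes "finite A" "f \<in> A \<rightarrow> {0, 1}"
  shows "finsum gf2 f A = (\<Sum>a\<in>A. f a) mod 2"
  using assms
proof (induction A rule: finite_induct)
  case empty
  interpret cring gf2 by (rule gf2_cring)
  show ?case by simp
next
  case (insert a A)
  interpret cring gf2 by (rule gf2_cring)
  have "finsum gf2 f (insert a A) = f a \<oplus>\<^bsub>gf2\<^esub> finsum gf2 f A"
    using insert by (intro finsum_insert) auto
  then show ?case
    using insert by (simp add: mod_add_right_eq)
qed

definition parity_recovers :: "nat \<Rightarrow> (nat \<Rightarrow> nat set) \<Rightarrow> nat set \<Rightarrow> nat set \<Rightarrow> nat \<Rightarrow> bool" where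
  "parity_recovers m B K Z i \<longleftrightarrow>
     (\<forall>i'\<in>{1..m}. even (card {kk\<in>K. i' \<in> B kk} + of_bool (i' \<in> Z) + of_bool (i' = i)))"

definition parity_decodable ::
  "nat \<Rightarrow> (nat \<Rightarrow> nat \<Rightarrow> nat set) \<Rightarrow> (nat \<times> nat) set \<Rightarrow> nat \<Rightarrow> (nat \<Rightarrow> nat set) \<Rightarrow> bool" where
  "parity_decodable m A W r B \<longleftrightarrow>
     (\<forall>(i, j)\<in>W. \<exists>K\<subseteq>{..<r}. \<exists>Z\<subseteq>A i j. parity_recovers m B K Z i)"

lemma parity_decodableI:
  assumes "\<And>i j. (i, j) \<in> W \<Longrightarrow> \<exists>K\<subseteq>{..<r}. \<exists>Z\<subseteq>A i j. parity_recovers m B K Z i"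
  shows "parity_decodable m A W r B"
  using assms unfolding parity_decodable_def by auto

lemma parity_decodableD:
  assumes "parity_decodable m A W r B" "(i, j) \<in> W"
  obtains K Z where "K \<subseteq> {..<r}" "Z \<subseteq> A i j" "parity_recovers m B K Z i"
  using assms unfolding parity_decodable_def by auto

lemma parity_decodable_mono:
  assumes "parity_decodable m A W r B" "r \<le> r'"
  shows "parity_decodable m A W r' B"
  using assms unfolding parity_decodable_def by (force simp: subset_eq)

lemma parity_decodable_choice:
  assumes "parity_decodable m A W r B"
  obtains K Z where "\<And>i j. (i, j) \<in> W \<Longrightarrow>
      K i j \<subseteq> {..<r} \<and> Z i j \<subseteq> A i j \<and> parity_recovers m B (K i j) (Z i j) i"
proof -
  have "\<forall>p. \<exists>KZ. p \<in> W \<longrightarrow> fst KZ \<subseteq> {..<r} \<and> snd KZ \<subseteq> A (fst p) (snd p)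
      \<and> parity_recovers m B (fst KZ) (snd KZ) (fst p)"
  proof
    fix p :: "nat \<times> nat"
    show "\<exists>KZ. p \<in> W \<longrightarrow> fst KZ \<subseteq> {..<r} \<and> snd KZ \<subseteq> A (fst p) (snd p)
      \<and> parity_recovers m B (fst KZ) (snd KZ) (fst p)"
    proof (cases "p \<in> W")
      case True
      then obtain K Z where "K \<subseteq> {..<r}" "Z \<subseteq> A (fst p) (snd p)" "parity_recovers m B K Z (fst p)"
        using parity_decodableD[OF assms, of "fst p" "snd p"] by auto
      then show ?thesis by (intro exI[of _ "(K, Z)"]) simp
    qed simp
  qed
  then obtain f where "\<forall>p. p \<in> W \<longrightarrow> fst (f p) \<subseteq> {..<r} \<and> snd (f p) \<subseteq> A (fst p) (snd p)
      \<and> parity_recovers m B (fst (f p)) (snd (f p)) (fst p)"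
    by (rule choice[THEN exE])
  then show ?thesis
    by (intro that[of "\<lambda>i j. fst (f (i, j))" "\<lambda>i j. snd (f (i, j))"]) auto
qed

lemma parity_recovers_even_sum:
  fixes x :: "nat \<Rightarrow> nat"
  assumes rec: "parity_recovers m B K Z i" and K: "finite K" and i: "i \<in> {1..m}"
  shows "even ((\<Sum>kk\<in>K. \<Sum>i'\<in>{1..m}. of_bool (i' \<in> B kk) * x i')
                + (\<Sum>i'\<in>{1..m}. of_bool (i' \<in> Z) * x i') + x i)"
proof -
  have "(\<Sum>kk\<in>K. \<Sum>i'\<in>{1..m}. of_bool (i' \<in> B kk) * x i')
      = (\<Sum>i'\<in>{1..m}. \<Sum>kk\<in>K. of_bool (i' \<in> B kk) * x i')"
    by (rule sum.swap)
  also have "\<dots> = (\<Sum>i'\<in>{1..m}. card {kk\<in>K. i' \<in> B kk} * x i')"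
    using K by (intro sum.cong refl) (simp add: sum_distrib_right[symmetric] Int_def)
  finally have rows: "(\<Sum>kk\<in>K. \<Sum>i'\<in>{1..m}. of_bool (i' \<in> B kk) * x i')
      = (\<Sum>i'\<in>{1..m}. card {kk\<in>K. i' \<in> B kk} * x i')" .
  have own: "(\<Sum>i'\<in>{1..m}. of_bool (i' = i) * x i') = x i"
    using i by simp
  have "(\<Sum>i'\<in>{1..m}. (card {kk\<in>K. i' \<in> B kk} + of_bool (i' \<in> Z) + of_bool (i' = i)) * x i')
      = (\<Sum>i'\<in>{1..m}. card {kk\<in>K. i' \<in> B kk} * x i') + (\<Sum>i'\<in>{1..m}. of_bool (i' \<in> Z) * x i')
        + (\<Sum>i'\<in>{1..m}. of_bool (i' = i) * x i')"
    by (simp only: distrib_right sum.distrib)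
  also have "\<dots> = (\<Sum>kk\<in>K. \<Sum>i'\<in>{1..m}. of_bool (i' \<in> B kk) * x i')
        + (\<Sum>i'\<in>{1..m}. of_bool (i' \<in> Z) * x i') + x i"
    by (simp only: rows own)
  finally have sum_eq: "(\<Sum>kk\<in>K. \<Sum>i'\<in>{1..m}. of_bool (i' \<in> B kk) * x i')
        + (\<Sum>i'\<in>{1..m}. of_bool (i' \<in> Z) * x i') + x i
      = (\<Sum>i'\<in>{1..m}. (card {kk\<in>K. i' \<in> B kk} + of_bool (i' \<in> Z) + of_bool (i' = i)) * x i')" ..
  have "even (\<Sum>i'\<in>{1..m}. (card {kk\<in>K. i' \<in> B kk} + of_bool (i' \<in> Z) + of_bool (i' = i)) * x i')"
    using rec unfolding parity_recovers_def by (intro dvd_sum) simp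
  then show ?thesis by (simp only: sum_eq)
qed

lemma parity_recovers_decode:
  fixes x :: "nat \<Rightarrow> nat"
  assumes rec: "parity_recovers m B K Z i" and K: "finite K" and i: "i \<in> {1..m}" and x: "x i < 2"
  shows "((\<Sum>kk\<in>K. (\<Sum>i'\<in>{1..m}. of_bool (i' \<in> B kk) * x i') mod 2)
          + (\<Sum>i'\<in>{1..m}. of_bool (i' \<in> Z) * x i')) mod 2 = x i"
    (is "((\<Sum>kk\<in>K. ?S kk mod 2) + ?T) mod 2 = _")
proof -
  have "((\<Sum>kk\<in>K. ?S kk mod 2) + ?T) mod 2 = ((\<Sum>kk\<in>K. ?S kk mod 2) mod 2 + ?T) mod 2"
    by (simp only: mod_add_left_eq)
  also have "\<dots> = ((\<Sum>kk\<in>K. ?S kk) + ?T) mod 2"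
    by (simp only: mod_sum_eq mod_add_left_eq)
  also have "\<dots> = x i mod 2"
  proof -
    have "a mod 2 = b mod 2" if "even (a + b)" for a b :: nat
      using that by presburger
    then show ?thesis
      using parity_recovers_even_sum[OF rec K i, of x] by blast
  qed
  finally show ?thesis
    using x by simp
qed

lemma has_index_code_if_parity_decodable:
  assumes "parity_decodable m A (gic_users m nU) r B"
  shows "has_index_code m nU A 1 r"
proof -
  obtain K Z where KZ: "\<And>i j. (i, j) \<in> gic_users m nU \<Longrightarrow>
      K i j \<subseteq> {..<r} \<and> Z i j \<subseteq> A i j \<and> parity_recovers m B (K i j) (Z i j) i"
    using parity_decodable_choice[OF assms] by blast
  define bits :: "(nat \<Rightarrow> nat \<Rightarrow> bool) \<Rightarrow> nat \<Rightarrow> nat" where "bits x i = of_bool (x i 0)" for x i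
  define parity where "parity x kk = (\<Sum>i'\<in>{1..m}. of_bool (i' \<in> B kk) * bits x i')" for x kk
  define \<phi> where "\<phi> x kk \<longleftrightarrow> kk < r \<and> odd (parity x kk)" for x kk
  define \<psi> where "\<psi> i j cw si b \<longleftrightarrow>
      odd ((\<Sum>kk\<in>K i j. of_bool (cw kk)) + (\<Sum>i'\<in>{1..m}. of_bool (i' \<in> Z i j) * bits si i'))"
    for i j cw si and b :: nat
  have "\<psi> i j (\<phi> x) (side_info (A i j) x) b = x i b"
    if user: "(i, j) \<in> gic_users m nU" and "b < 1" for i j x b
  proof -
    have K: "K i j \<subseteq> {..<r}" and Z: "Z i j \<subseteq> A i j"
      and rec: "parity_recovers m B (K i j) (Z i j) i"
      using KZ[OF user] by auto
    have i: "i \<in> {1..m}" using user by (simp add: gic_users_def)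
    define T where "T = (\<Sum>i'\<in>{1..m}. of_bool (i' \<in> Z i j) * bits x i')"
    have "of_bool (\<phi> x kk) = parity x kk mod 2" if "kk \<in> K i j" for kk
      using that K by (simp add: \<phi>_def odd_iff_mod_2_eq_one subset_eq)
    then have codeword: "(\<Sum>kk\<in>K i j. of_bool (\<phi> x kk)) = (\<Sum>kk\<in>K i j. parity x kk mod 2)"
      by simp
    have side: "(\<Sum>i'\<in>{1..m}. of_bool (i' \<in> Z i j) * bits (side_info (A i j) x) i') = T"
      using Z unfolding T_def by (intro sum.cong) (auto simp: bits_def side_info_def)
    have "((\<Sum>kk\<in>K i j. parity x kk mod 2) + T) mod 2 = bits x i"
      unfolding parity_def T_def using K finite_subset
      by (intro parity_recovers_decode[OF rec _ i]) (auto simp: bits_def)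
    then have "\<psi> i j (\<phi> x) (side_info (A i j) x) b \<longleftrightarrow> bits x i = 1"
      unfolding \<psi>_def codeword side odd_iff_mod_2_eq_one by simp
    then show ?thesis
      using \<open>b < 1\<close> by (simp add: bits_def)
  qed
  moreover have "\<not> \<phi> x kk" if "r \<le> kk" for x kk
    using that by (simp add: \<phi>_def)
  ultimately show ?thesis
    unfolding has_index_code_def by (intro exI[of _ \<phi>] exI[of _ \<psi>] conjI ballI allI impI) auto
qed

lemma finite_gic_users: "finite (gic_users m nU)"
proof -
  have "gic_users m nU = (SIGMA i:{1..m}. {1..nU i})"
    by (auto simp: gic_users_def)
  then show ?thesis by simp
qed

lemma finite_partition_gic_users:
  "partition_on (gic_users m nU) P \<Longrightarrow> finite P"
  using finite_gic_users by (metis finite_UnionD partition_onD1)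

lemma part_Y_subset: "W \<subseteq> gic_users m nU \<Longrightarrow> part_Y W \<subseteq> {1..m}"
  by (auto simp: part_Y_def gic_users_def)

lemma part_c_le: 
  assumes "finite W" "(i, j) \<in> W"
  shows "part_c A W \<le> card (A i j \<inter> part_Y W)"
proof -
  have "{card (A i j \<inter> part_Y W) | i j. (i, j) \<in> W} = (\<lambda>(i, j). card (A i j \<inter> part_Y W)) ` W"
    by auto
  then show ?thesis
    unfolding part_c_def using assms by (auto intro: Min_le)
qed

definition parity_group_code ::
  "nat \<Rightarrow> (nat \<Rightarrow> nat \<Rightarrow> nat set) \<Rightarrow> (nat \<times> nat) set \<Rightarrow> (nat \<Rightarrow> nat set) \<Rightarrow> bool" where
  "parity_group_code m A W B \<longleftrightarrow>
     parity_decodable m A W (part_b A W) B \<and> (\<forall>kk < part_b A W. B kk \<subseteq> part_Y W)"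

lemma valid_choice_gf2_if_parity_group_code:
  assumes users: "\<And>W. W \<in> P \<Longrightarrow> W \<subseteq> gic_users m nU"
    and codes: "\<And>W. W \<in> P \<Longrightarrow> parity_group_code m A W (B W)"
  shows "valid_choice gf2 m A P (\<lambda>W kk i. of_bool (i \<in> B W kk))"
  unfolding valid_choice_def
proof (intro conjI ballI allI impI)
  fix W kk i
  assume "W \<in> P" "kk < part_b A W"
  then show "of_bool (i \<in> B W kk) \<in> carrier gf2"
    and "i \<notin> part_Y W \<Longrightarrow> of_bool (i \<in> B W kk) = \<zero>\<^bsub>gf2\<^esub>"
    using codes unfolding parity_group_code_def by auto
next
  fix W p
  assume W: "W \<in> P" and p: "p \<in> W"
  obtain i j where ij: "p = (i, j)" by fastforce
  have "parity_decodable m A W (part_b A W) (B W)"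
    using codes[OF W] unfolding parity_group_code_def by blast
  then obtain K Z where K: "K \<subseteq> {..<part_b A W}" and Z: "Z \<subseteq> A i j"
    and rec: "parity_recovers m (B W) K Z i"
    using p ij by (auto elim: parity_decodableD)
  have i: "i \<in> {1..m}" using users[OF W] p ij by (auto simp: gic_users_def)
  have fin: "finite K" using K finite_subset by blast
  define \<psi> :: "(nat \<Rightarrow> nat) \<Rightarrow> (nat \<Rightarrow> nat) \<Rightarrow> nat" where
    "\<psi> cw si = ((\<Sum>kk\<in>K. cw kk) + (\<Sum>i'\<in>{1..m}. of_bool (i' \<in> Z) * si i')) mod 2" for cw si
  have "\<psi> (\<lambda>kk. if kk < part_b A W
              then finsum gf2 (\<lambda>i'. of_bool (i' \<in> B W kk) \<otimes>\<^bsub>gf2\<^esub> x i') {1..m} else \<zero>\<^bsub>gf2\<^esub>)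
          (\<lambda>i'. if i' \<in> A i j then x i' else \<zero>\<^bsub>gf2\<^esub>) = x i"
    if x: "\<forall>i'. x i' \<in> carrier gf2" for x
  proof -
    have "finsum gf2 (\<lambda>i'. of_bool (i' \<in> B W kk) \<otimes>\<^bsub>gf2\<^esub> x i') {1..m}
        = (\<Sum>i'\<in>{1..m}. of_bool (i' \<in> B W kk) * x i') mod 2" for kk
      using x by (subst gf2_finsum) auto
    then have "(\<Sum>kk\<in>K. if kk < part_b A W
              then finsum gf2 (\<lambda>i'. of_bool (i' \<in> B W kk) \<otimes>\<^bsub>gf2\<^esub> x i') {1..m} else \<zero>\<^bsub>gf2\<^esub>)
        = (\<Sum>kk\<in>K. (\<Sum>i'\<in>{1..m}. of_bool (i' \<in> B W kk) * x i') mod 2)"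
      using K by (intro sum.cong) auto
    moreover have "(\<Sum>i'\<in>{1..m}. of_bool (i' \<in> Z) * (if i' \<in> A i j then x i' else \<zero>\<^bsub>gf2\<^esub>))
        = (\<Sum>i'\<in>{1..m}. of_bool (i' \<in> Z) * x i')"
      using Z by (intro sum.cong) auto
    moreover have "x i < 2"
      using x[rule_format, of i] by auto
    ultimately show ?thesis
      unfolding \<psi>_def using parity_recovers_decode[OF rec fin i] by simp
  qed
  then show "case p of (i, j) \<Rightarrow> \<exists>\<psi> :: (nat \<Rightarrow> nat) \<Rightarrow> (nat \<Rightarrow> nat) \<Rightarrow> nat. \<forall>x. (\<forall>i'. x i' \<in> carrier gf2) \<longrightarrow>
          \<psi> (\<lambda>kk. if kk < part_b A W
              then finsum gf2 (\<lambda>i'. of_bool (i' \<in> B W kk) \<otimes>\<^bsub>gf2\<^esub> x i') {1..m} else \<zero>\<^bsub>gf2\<^esub>)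
          (\<lambda>i'. if i' \<in> A i j then x i' else \<zero>\<^bsub>gf2\<^esub>) = x i"
    unfolding ij by blast
qed

lemma uncoded_parity_group_code:
  assumes W: "W \<subseteq> gic_users m nU" and c: "part_c A W = 0"
  shows "parity_group_code m A W (\<lambda>kk. {sorted_list_of_set (part_Y W) ! kk})"
proof -
  define ys where "ys = sorted_list_of_set (part_Y W)"
  have fin: "finite (part_Y W)"
    using part_Y_subset[OF W] finite_subset by blast
  have set_ys: "set ys = part_Y W" and len: "length ys = part_b A W"
    using fin c by (simp_all add: ys_def part_b_def)
  have "parity_decodable m A W (part_b A W) (\<lambda>kk. {ys ! kk})"
  proof (rule parity_decodableI)
    fix i j
    assume "(i, j) \<in> W"
    then have "i \<in> set ys"
      unfolding set_ys part_Y_def by blast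
    then obtain n where n: "n < length ys" "ys ! n = i"
      by (auto simp: in_set_conv_nth)
    have "{kk\<in>{n}. i' \<in> {ys ! kk}} = (if i' = i then {n} else {})" for i'
      using n by auto
    then have "parity_recovers m (\<lambda>kk. {ys ! kk}) {n} {} i"
      unfolding parity_recovers_def by simp
    then show "\<exists>K\<subseteq>{..<part_b A W}. \<exists>Z\<subseteq>A i j. parity_recovers m (\<lambda>kk. {ys ! kk}) K Z i"
      using n len by (intro exI[of _ "{n}"] exI[of _ "{}"]) auto
  qed
  moreover have "\<forall>kk < part_b A W. {ys ! kk} \<subseteq> part_Y W"
    using len set_ys nth_mem by auto
  ultimately show ?thesis
    unfolding parity_group_code_def ys_def by blast
qed

lemma pairing_parity_recovers:
  assumes dist: "distinct ys" and len: "length ys = Suc b"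
    and n: "n < length ys" and n': "n' < length ys" and "n \<noteq> n'"
  shows "parity_recovers m (\<lambda>kk. {ys ! kk, ys ! b}) ({n, n'} \<inter> {..<b}) {ys ! n'} (ys ! n)"
proof -
  define B where "B kk = {ys ! kk, ys ! b}" for kk
  define K where "K = {n, n'} \<inter> {..<b}"
  have at_position: "even (card {kk\<in>K. ys ! p \<in> B kk} + of_bool (ys ! p = ys ! n') + of_bool (ys ! p = ys ! n))"
    if p: "p < length ys" for p
  proof -
    have same: "ys ! p = ys ! q \<longleftrightarrow> p = q" if "q < length ys" for q
      using dist p that by (simp add: nth_eq_iff_index_eq)
    have le: "n \<le> b" "n' \<le> b" "p \<le> b"
      using len n n' p by auto
    have idx: "ys ! p = ys ! n \<longleftrightarrow> p = n" "ys ! p = ys ! n' \<longleftrightarrow> p = n'"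
      using same n n' by auto
    show ?thesis
    proof (cases "p = b")
      case True
      then have "{kk\<in>K. ys ! p \<in> B kk} = K"
        by (auto simp: B_def)
      moreover have "card K + of_bool (b = n') + of_bool (b = n) = 2"
        using le \<open>n \<noteq> n'\<close> by (cases "n = b"; cases "n' = b") (auto simp: K_def)
      ultimately show ?thesis
        using True idx by simp
    next
      case False
      have "ys ! p \<in> B kk \<longleftrightarrow> kk = p" if "kk \<in> K" for kk
        using that False same[of kk] same[of b] le len by (auto simp: B_def K_def)
      then have "{kk\<in>K. ys ! p \<in> B kk} = K \<inter> {p}"
        by blast
      moreover have "card (K \<inter> {p}) = of_bool (p = n \<or> p = n')"
        using False le by (auto simp: K_def)
      ultimately show ?thesis
        using idx \<open>n \<noteq> n'\<close> by auto
    qed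
  qed
  have "even (card {kk\<in>K. i \<in> B kk} + of_bool (i \<in> {ys ! n'}) + of_bool (i = ys ! n))" for i
  proof (cases "i \<in> set ys")
    case True
    then obtain p where "p < length ys" "i = ys ! p"
      by (auto simp: in_set_conv_nth)
    then show ?thesis
      using at_position by simp
  next
    case False
    then have none: "{kk\<in>K. i \<in> B kk} = {}" and "i \<noteq> ys ! n'" "i \<noteq> ys ! n"
      using len n n' nth_mem by (auto simp: B_def K_def)
    then show ?thesis
      by (simp only: none card.empty) simp
  qed
  then show ?thesis
    unfolding parity_recovers_def B_def K_def by blast
qed

lemma pairing_parity_group_code:
  assumes W: "W \<subseteq> gic_users m nU" and c: "part_c A W = 1"
    and irrefl: "\<And>i j. (i, j) \<in> W \<Longrightarrow> i \<notin> A i j"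
  defines "ys \<equiv> sorted_list_of_set (part_Y W)"
  shows "parity_group_code m A W (\<lambda>kk. {ys ! kk, ys ! part_b A W})"
proof -
  define b where "b = part_b A W"
  have fin: "finite W" "finite (part_Y W)"
    using W finite_gic_users part_Y_subset[OF W] finite_subset by blast+
  have set_ys: "set ys = part_Y W" and dist: "distinct ys" and b: "b = length ys - 1"
    using fin c by (simp_all add: ys_def b_def part_b_def)
  have "parity_decodable m A W b (\<lambda>kk. {ys ! kk, ys ! b})"
  proof (rule parity_decodableI)
    fix i j
    assume ij: "(i, j) \<in> W"
    have "1 \<le> card (A i j \<inter> part_Y W)"
      using part_c_le[OF fin(1) ij, of A] c by simp
    then obtain i' where i': "i' \<in> A i j" "i' \<in> part_Y W"
      by (metis card.empty disjoint_iff not_one_le_zero)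
    have "i \<in> part_Y W"
      using ij unfolding part_Y_def by blast
    then obtain n n' where n: "n < length ys" "ys ! n = i" and n': "n' < length ys" "ys ! n' = i'"
      using i'(2) unfolding set_ys[symmetric] in_set_conv_nth by metis
    have "n \<noteq> n'"
      using n n' i'(1) irrefl[OF ij] by auto
    moreover have "length ys = Suc b"
      using b n by simp
    ultimately have "parity_recovers m (\<lambda>kk. {ys ! kk, ys ! b}) ({n, n'} \<inter> {..<b}) {i'} i"
      using pairing_parity_recovers[OF dist _ n(1) n'(1)] n n' by simp
    then show "\<exists>K\<subseteq>{..<b}. \<exists>Z\<subseteq>A i j. parity_recovers m (\<lambda>kk. {ys ! kk, ys ! b}) K Z i"
      using i'(1) by (intro exI[of _ "{n, n'} \<inter> {..<b}"] exI[of _ "{i'}"]) auto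
  qed
  moreover have "{ys ! kk, ys ! b} \<subseteq> part_Y W" if "kk < b" for kk
  proof -
    have "kk < length ys" "b < length ys"
      using that b by auto
    then show ?thesis
      unfolding set_ys[symmetric] by simp
  qed
  ultimately show ?thesis
    unfolding parity_group_code_def b_def by auto
qed

definition vec_dot :: "('c, 'd) ring_scheme \<Rightarrow> nat \<Rightarrow> (nat \<Rightarrow> 'c) \<Rightarrow> (nat \<Rightarrow> 'c) \<Rightarrow> 'c" where
  "vec_dot R m v x = finsum R (\<lambda>i. v i \<otimes>\<^bsub>R\<^esub> x i) {1..m}"

definition vecs_on :: "('c, 'd) ring_scheme \<Rightarrow> nat set \<Rightarrow> (nat \<Rightarrow> 'c) set" where
  "vecs_on R I = {x. (\<forall>i. x i \<in> carrier R) \<and> (\<forall>i. i \<notin> I \<longrightarrow> x i = \<zero>\<^bsub>R\<^esub>)}"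

lemma (in abelian_monoid) finsum_swap:
  assumes "finite A" "finite B" "\<And>a b. a \<in> A \<Longrightarrow> b \<in> B \<Longrightarrow> g a b \<in> carrier G"
  shows "(\<Oplus>a\<in>A. \<Oplus>b\<in>B. g a b) = (\<Oplus>b\<in>B. \<Oplus>a\<in>A. g a b)"
  using assms
proof (induction A rule: finite_induct)
  case empty
  then show ?case by (simp add: finsum_zero)
next
  case (insert a A)
  have "(\<Oplus>a'\<in>insert a A. \<Oplus>b\<in>B. g a' b) = (\<Oplus>b\<in>B. g a b) \<oplus> (\<Oplus>b\<in>B. \<Oplus>a'\<in>A. g a' b)"
    using insert by (simp add: finsum_insert finsum_closed Pi_def)
  also have "\<dots> = (\<Oplus>b\<in>B. g a b \<oplus> (\<Oplus>a'\<in>A. g a' b))"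
    using insert by (intro finsum_addf[symmetric]) (auto intro: finsum_closed)
  also have "\<dots> = (\<Oplus>b\<in>B. \<Oplus>a'\<in>insert a A. g a' b)"
    using insert by (intro finsum_cong) (auto simp: finsum_insert intro: finsum_closed)
  finally show ?case .
qed

lemma (in cring) finsum_vec_dot_eq_zero:
  assumes T: "finite T" and c: "\<forall>u\<in>T. c u \<in> carrier R"
    and vecs: "\<forall>u\<in>T. \<forall>i. u i \<in> carrier R" and z: "\<forall>i. z i \<in> carrier R"
    and zero: "\<forall>i\<in>{1..m}. (\<Oplus>u\<in>T. c u \<otimes> u i) = \<zero>"
  shows "(\<Oplus>u\<in>T. c u \<otimes> vec_dot R m u z) = \<zero>"
proof -
  have "(\<Oplus>u\<in>T. c u \<otimes> vec_dot R m u z) = (\<Oplus>u\<in>T. \<Oplus>i\<in>{1..m}. c u \<otimes> (u i \<otimes> z i))"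
    using c vecs z unfolding vec_dot_def by (intro finsum_cong) (auto simp: finsum_rdistr)
  also have "\<dots> = (\<Oplus>i\<in>{1..m}. \<Oplus>u\<in>T. c u \<otimes> (u i \<otimes> z i))"
    using T c vecs z by (intro finsum_swap) auto
  also have "\<dots> = (\<Oplus>i\<in>{1..m}. (\<Oplus>u\<in>T. c u \<otimes> u i) \<otimes> z i)"
  proof (rule finsum_cong'[OF refl])
    show "(\<lambda>i. (\<Oplus>u\<in>T. c u \<otimes> u i) \<otimes> z i) \<in> {1..m} \<rightarrow> carrier R"
      using c vecs z by (auto intro: finsum_closed)
    fix i
    have "(\<Oplus>u\<in>T. c u \<otimes> u i) \<otimes> z i = (\<Oplus>u\<in>T. c u \<otimes> u i \<otimes> z i)"
      using T c vecs z by (intro finsum_ldistr) auto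
    also have "\<dots> = (\<Oplus>u\<in>T. c u \<otimes> (u i \<otimes> z i))"
      using c vecs z by (intro finsum_cong') (auto simp: m_assoc)
    finally show "(\<Oplus>u\<in>T. c u \<otimes> (u i \<otimes> z i)) = (\<Oplus>u\<in>T. c u \<otimes> u i) \<otimes> z i" ..
  qed
  also have "\<dots> = (\<Oplus>i\<in>{1..m}. \<zero>)"
    using zero z by (intro finsum_cong') auto
  also have "\<dots> = \<zero>"
    by (rule finsum_zero)
  finally show ?thesis .
qed

lemma vec_dot_eq_if_dependent:
  fixes R :: "'c ring" (structure)
  assumes "field R" and T: "finite T" "lin_indep_vecs R m T"
    and v: "v \<notin> T" "\<not> lin_indep_vecs R m (insert v T)"
    and vecs: "\<forall>u\<in>insert v T. \<forall>i. u i \<in> carrier R"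
    and x: "\<forall>i. x i \<in> carrier R" and y: "\<forall>i. y i \<in> carrier R"
    and eq: "\<forall>u\<in>T. vec_dot R m u x = vec_dot R m u y"
  shows "vec_dot R m v x = vec_dot R m v y"
proof -
  interpret field R by fact
  have dot_closed: "vec_dot R m u z \<in> carrier R" if "u \<in> insert v T" "\<forall>i. z i \<in> carrier R" for u z
    using that vecs unfolding vec_dot_def by (auto intro: finsum_closed)
  obtain c where c: "\<forall>u\<in>insert v T. c u \<in> carrier R"
    and c0: "\<forall>i\<in>{1..m}. (\<Oplus>u\<in>insert v T. c u \<otimes> u i) = \<zero>"
    and nontrivial: "\<exists>u\<in>insert v T. c u \<noteq> \<zero>"
    using v(2) T(1) unfolding lin_indep_vecs_def by auto
  have cv: "c v \<noteq> \<zero>"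
  proof
    assume cv0: "c v = \<zero>"
    have "(\<Oplus>u\<in>insert v T. c u \<otimes> u i) = (\<Oplus>u\<in>T. c u \<otimes> u i)" for i
      using T(1) v(1) c vecs cv0 by (simp add: finsum_insert finsum_closed Pi_def)
    then have "\<forall>u\<in>T. c u = \<zero>"
      using T(2) c c0 unfolding lin_indep_vecs_def by auto
    then show False
      using nontrivial cv0 by auto
  qed
  have relation: "c v \<otimes> vec_dot R m v z \<oplus> (\<Oplus>u\<in>T. c u \<otimes> vec_dot R m u z) = \<zero>"
    if z: "\<forall>i. z i \<in> carrier R" for z
  proof -
    have "(\<Oplus>u\<in>insert v T. c u \<otimes> vec_dot R m u z) = \<zero>"
      using T(1) c vecs z c0 by (intro finsum_vec_dot_eq_zero) auto
    then show ?thesis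
      using T(1) v(1) c dot_closed[OF _ z] by (simp add: finsum_insert Pi_def)
  qed
  define s where "s = (\<Oplus>u\<in>T. c u \<otimes> vec_dot R m u y)"
  have s: "s \<in> carrier R"
    unfolding s_def using c dot_closed[OF _ y] by (auto intro: finsum_closed)
  have "(\<Oplus>u\<in>T. c u \<otimes> vec_dot R m u x) = s"
    unfolding s_def using eq c dot_closed[OF _ y] by (intro finsum_cong') auto
  then have "c v \<otimes> vec_dot R m v x \<oplus> s = c v \<otimes> vec_dot R m v y \<oplus> s"
    using relation[OF x] relation[OF y] unfolding s_def by simp
  then have "c v \<otimes> vec_dot R m v x = c v \<otimes> vec_dot R m v y"
    using s c dot_closed x y by simp
  then show ?thesis
    using cv c dot_closed x y by (simp add: m_lcancel)
qed

lemma lin_indep_vecs_empty: "lin_indep_vecs R m {}"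
  by (simp add: lin_indep_vecs_def)

lemma card_le_vec_rank_if_lin_indep:
  assumes "finite S" "T \<subseteq> S" "lin_indep_vecs R m T"
  shows "card T \<le> vec_rank R m S"
proof -
  have "finite {card T | T. T \<subseteq> S \<and> lin_indep_vecs R m T}"
    using assms(1) by (rule finite_subset[rotated, OF finite_imageI[OF finite_Pow_iff[THEN iffD2]]]) auto
  then show ?thesis
    unfolding vec_rank_def using assms(2,3) by (auto intro: Max_ge)
qed

lemma vec_rank_attained:
  assumes S: "finite S"
  obtains T where "T \<subseteq> S" "lin_indep_vecs R m T" "card T = vec_rank R m S"
    "\<And>v. v \<in> S \<Longrightarrow> v \<notin> T \<Longrightarrow> \<not> lin_indep_vecs R m (insert v T)"
proof -
  let ?C = "{card T | T. T \<subseteq> S \<and> lin_indep_vecs R m T}"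
  have "finite ?C"
    using S by (rule finite_subset[rotated, OF finite_imageI[OF finite_Pow_iff[THEN iffD2]]]) auto
  moreover have "?C \<noteq> {}"
    using lin_indep_vecs_empty by blast
  ultimately have "vec_rank R m S \<in> ?C"
    unfolding vec_rank_def by (rule Max_in)
  then obtain T where T: "T \<subseteq> S" "lin_indep_vecs R m T" "card T = vec_rank R m S"
    by auto
  moreover have "\<not> lin_indep_vecs R m (insert v T)" if "v \<in> S" "v \<notin> T" for v
  proof
    assume "lin_indep_vecs R m (insert v T)"
    then have "card (insert v T) \<le> card T"
      using card_le_vec_rank_if_lin_indep[OF S] T that by auto
    then show False
      using T(1) S that(2) finite_subset by fastforce
  qed
  ultimately show ?thesis
    using that by blast
qed

lemma card_le_if_inj_on_vecs_on:
  fixes R :: "'c ring" (structure)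
  assumes R: "field R" "finite (carrier R)"
    and T: "finite T" "\<forall>w\<in>T. \<forall>i. w i \<in> carrier R" and I: "finite I"
    and inj: "inj_on (\<lambda>x. \<lambda>w\<in>T. vec_dot R m w x) (vecs_on R I)"
  shows "card I \<le> card T"
proof -
  interpret field R by (fact R)
  define ext where "ext f = (\<lambda>i. if i \<in> I then f i else \<zero>)" for f :: "nat \<Rightarrow> 'c"
  define F where "F f = (\<lambda>w\<in>T. vec_dot R m w (ext f))" for f
  have ext: "ext f \<in> vecs_on R I" if "f \<in> I \<rightarrow>\<^sub>E carrier R" for f
    using that by (auto simp: ext_def vecs_on_def)
  have "inj_on F (I \<rightarrow>\<^sub>E carrier R)"
  proof (intro inj_onI)
    fix f g
    assume fg: "f \<in> I \<rightarrow>\<^sub>E carrier R" "g \<in> I \<rightarrow>\<^sub>E carrier R" and "F f = F g"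
    then have "ext f = ext g"
      using inj ext unfolding F_def by (auto dest: inj_onD)
    then show "f = g"
      using fg by (intro PiE_ext[OF fg]) (metis ext_def)
  qed
  moreover have "F ` (I \<rightarrow>\<^sub>E carrier R) \<subseteq> T \<rightarrow>\<^sub>E carrier R"
    using ext T(2) unfolding F_def by (auto simp: vec_dot_def vecs_on_def intro!: finsum_closed)
  ultimately have "card (I \<rightarrow>\<^sub>E carrier R) \<le> card (T \<rightarrow>\<^sub>E carrier R)"
    using T(1) R(2) by (intro card_inj_on_le) (auto intro: finite_PiE)
  then have pow: "card (carrier R) ^ card I \<le> card (carrier R) ^ card T"
    using I T(1) by (simp add: card_PiE)
  have "card {\<zero>, \<one>} \<le> card (carrier R)"
    using R(2) by (intro card_mono) auto
  then have "1 < card (carrier R)"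
    by simp
  then show ?thesis
    using pow by (rule power_le_imp_le_exp)
qed

lemma card_le_vec_rank:
  fixes R :: "'c ring" (structure)
  assumes R: "field R" "finite (carrier R)"
    and S: "finite S" "\<forall>v\<in>S. \<forall>i. v i \<in> carrier R" and I: "finite I"
    and inj: "inj_on (\<lambda>x. \<lambda>v\<in>S. vec_dot R m v x) (vecs_on R I)"
  shows "card I \<le> vec_rank R m S"
proof -
  obtain T where T: "T \<subseteq> S" "lin_indep_vecs R m T" and rank: "card T = vec_rank R m S"
    and maximal: "\<And>v. v \<in> S \<Longrightarrow> v \<notin> T \<Longrightarrow> \<not> lin_indep_vecs R m (insert v T)"
    using vec_rank_attained[OF S(1)] by blast
  have finT: "finite T"
    using T(1) S(1) finite_subset by blast
  have determined: "vec_dot R m v x = vec_dot R m v y"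
    if "v \<in> S" "x \<in> vecs_on R I" "y \<in> vecs_on R I" "\<forall>w\<in>T. vec_dot R m w x = vec_dot R m w y" for v x y
  proof (cases "v \<in> T")
    case False
    moreover have "\<forall>u\<in>insert v T. \<forall>i. u i \<in> carrier R"
      using T(1) S(2) \<open>v \<in> S\<close> by auto
    ultimately show ?thesis
      using vec_dot_eq_if_dependent[OF R(1) finT T(2) False maximal[OF \<open>v \<in> S\<close> False]] that
      by (auto simp: vecs_on_def)
  qed (use that in auto)
  have "inj_on (\<lambda>x. \<lambda>w\<in>T. vec_dot R m w x) (vecs_on R I)"
  proof (intro inj_onI)
    fix x y
    assume xy: "x \<in> vecs_on R I" "y \<in> vecs_on R I"
      and "(\<lambda>w\<in>T. vec_dot R m w x) = (\<lambda>w\<in>T. vec_dot R m w y)"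
    then have "\<forall>w\<in>T. vec_dot R m w x = vec_dot R m w y"
      by (metis restrict_apply')
    then have "(\<lambda>v\<in>S. vec_dot R m v x) = (\<lambda>v\<in>S. vec_dot R m v y)"
      using determined[OF _ xy] by (intro restrict_ext) blast
    then show "x = y"
      using inj xy by (auto dest: inj_onD)
  qed
  then have "card I \<le> card T"
    using T(1) S(2) by (intro card_le_if_inj_on_vecs_on[OF R finT _ I]) auto
  then show ?thesis
    using rank by simp
qed

lemma vec_rank_le_card_nonzero:
  fixes R :: "'c ring" (structure)
  assumes R: "field R" and S: "finite S" "\<forall>v\<in>S. \<forall>i. v i \<in> carrier R"
  shows "vec_rank R m S \<le> card (S - {\<lambda>i. \<zero>})"
proof -
  interpret field R by (fact R)
  obtain T where T: "T \<subseteq> S" "lin_indep_vecs R m T" and rank: "card T = vec_rank R m S"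
    using vec_rank_attained[OF S(1)] .
  have "(\<lambda>i. \<zero>) \<notin> T"
  proof
    assume zero_in: "(\<lambda>i. \<zero>) \<in> T"
    define c where "c v = (if v = (\<lambda>i. \<zero>) then \<one> else \<zero>)" for v :: "nat \<Rightarrow> 'c"
    have "(\<Oplus>v\<in>T. c v \<otimes> v i) = (\<Oplus>v\<in>T. \<zero>)" for i
      using T(1) S(2) by (intro finsum_cong') (auto simp: c_def)
    then have "\<forall>i\<in>{1..m}. (\<Oplus>v\<in>T. c v \<otimes> v i) = \<zero>"
      by (simp add: finsum_zero)
    moreover have "\<forall>v\<in>T. c v \<in> carrier R"
      by (simp add: c_def)
    ultimately have "c (\<lambda>i. \<zero>) = \<zero>"
      using T(2) zero_in unfolding lin_indep_vecs_def by blast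
    then show False
      by (simp add: c_def)
  qed
  then have "T \<subseteq> S - {\<lambda>i. \<zero>}"
    using T(1) by blast
  then show ?thesis
    using S(1) rank by (metis card_mono finite_Diff)
qed

definition gic_independent :: "nat \<Rightarrow> (nat \<Rightarrow> nat) \<Rightarrow> (nat \<Rightarrow> nat \<Rightarrow> nat set) \<Rightarrow> nat set \<Rightarrow> bool" where
  "gic_independent m nU A S \<longleftrightarrow> S \<subseteq> {1..m} \<and> (\<forall>i\<in>S. \<exists>j\<in>{1..nU i}. A i j \<inter> S = {})"

lemma index_code_length_ge_independent:
  assumes code: "has_index_code m nU A t r" and S: "gic_independent m nU A S"
  shows "card S * t \<le> r"
proof -
  obtain \<phi> :: "(nat \<Rightarrow> nat \<Rightarrow> bool) \<Rightarrow> nat \<Rightarrow> bool"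
    and \<psi> :: "nat \<Rightarrow> nat \<Rightarrow> (nat \<Rightarrow> bool) \<Rightarrow> (nat \<Rightarrow> nat \<Rightarrow> bool) \<Rightarrow> nat \<Rightarrow> bool"
    where enc: "\<forall>x \<in> packet_space m t. \<forall>b. r \<le> b \<longrightarrow> \<not> \<phi> x b"
      and dec: "\<forall>(i, j) \<in> gic_users m nU. \<forall>x \<in> packet_space m t. \<forall>b < t.
            \<psi> i j (\<phi> x) (side_info (A i j) x) b = x i b"
    using code unfolding has_index_code_def by blast
  define D where "D = S \<times> {..<t}"
  define packets where "packets Z i b \<longleftrightarrow> (i, b) \<in> Z" for Z :: "(nat \<times> nat) set" and i b
  have finS: "finite S"
    using S finite_subset unfolding gic_independent_def by blast
  have space: "packets Z \<in> packet_space m t" if "Z \<subseteq> D" for Z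
    using that S unfolding packet_space_def packets_def D_def gic_independent_def by auto
  have "inj_on (\<lambda>Z. {b. \<phi> (packets Z) b}) (Pow D)"
  proof (intro inj_onI)
    fix Z Z'
    assume Z: "Z \<in> Pow D" "Z' \<in> Pow D" and same: "{b. \<phi> (packets Z) b} = {b. \<phi> (packets Z') b}"
    have "(i, b) \<in> Z \<longleftrightarrow> (i, b) \<in> Z'" if "(i, b) \<in> D" for i b
    proof -
      have i: "i \<in> S" and b: "b < t"
        using that by (auto simp: D_def)
      obtain j where j: "j \<in> {1..nU i}" and blind: "A i j \<inter> S = {}"
        using S i unfolding gic_independent_def by blast
      have user: "(i, j) \<in> gic_users m nU"
        using S i j unfolding gic_independent_def gic_users_def by auto
      have "side_info (A i j) (packets Z) = side_info (A i j) (packets Z')"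
        using Z blind by (auto simp: side_info_def packets_def D_def fun_eq_iff)
      moreover have "\<phi> (packets Z) = \<phi> (packets Z')"
        using same by auto
      moreover have "\<forall>x\<in>packet_space m t. \<psi> i j (\<phi> x) (side_info (A i j) x) b = x i b"
        using bspec[OF dec user] b by simp
      ultimately have "packets Z i b = packets Z' i b"
        using space Z by (metis PowD)
      then show ?thesis
        unfolding packets_def .
    qed
    then show "Z = Z'"
      using Z by auto
  qed
  moreover have "(\<lambda>Z. {b. \<phi> (packets Z) b}) ` Pow D \<subseteq> Pow {..<r}"
  proof (clarsimp)
    fix Z b
    assume "Z \<subseteq> D" "\<phi> (packets Z) b"
    then show "b < r"
      using enc space by (meson not_less)
  qed
  ultimately have "card (Pow D) \<le> card (Pow {..<r})"
    by (intro card_inj_on_le) auto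
  then have "2 ^ (card S * t) \<le> (2::nat) ^ r"
    using finS by (simp add: card_Pow D_def card_cartesian_product)
  then show ?thesis
    by simp
qed

lemma finite_choice_rows: "finite P \<Longrightarrow> finite (choice_rows A P \<alpha>)"
proof -
  assume "finite P"
  moreover have "choice_rows A P \<alpha> = (\<Union>W\<in>P. (\<alpha> W) ` {..<part_b A W})"
    unfolding choice_rows_def by auto
  ultimately show ?thesis by simp
qed

lemma valid_choice_decoder:
  assumes "valid_choice R m A P \<alpha>" "W \<in> P" "(i, j) \<in> W"
  obtains \<psi> :: "(nat \<Rightarrow> 'c) \<Rightarrow> (nat \<Rightarrow> 'c) \<Rightarrow> 'c" where
    "\<And>x. \<forall>i'. x i' \<in> carrier R \<Longrightarrow>
       \<psi> (\<lambda>k. if k < part_b A W then vec_dot R m (\<alpha> W k) x else \<zero>\<^bsub>R\<^esub>)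
         (\<lambda>i'. if i' \<in> A i j then x i' else \<zero>\<^bsub>R\<^esub>) = x i"
proof -
  have "\<exists>\<psi> :: (nat \<Rightarrow> 'c) \<Rightarrow> (nat \<Rightarrow> 'c) \<Rightarrow> 'c. \<forall>x. (\<forall>i'. x i' \<in> carrier R) \<longrightarrow>
      \<psi> (\<lambda>k. if k < part_b A W then vec_dot R m (\<alpha> W k) x else \<zero>\<^bsub>R\<^esub>)
        (\<lambda>i'. if i' \<in> A i j then x i' else \<zero>\<^bsub>R\<^esub>) = x i"
    using bspec[OF bspec[OF conjunct2[OF assms(1)[unfolded valid_choice_def]] assms(2)] assms(3)]
    unfolding vec_dot_def by simp
  then show ?thesis
    using that by blast
qed

lemma vec_rank_choice_rows_ge_independent:
  fixes R :: "'c ring" (structure)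
  assumes R: "field R" "finite (carrier R)" and P: "partition_on (gic_users m nU) P"
    and valid: "valid_choice R m A P \<alpha>" and S: "gic_independent m nU A S"
  shows "card S \<le> vec_rank R m (choice_rows A P \<alpha>)"
proof (rule card_le_vec_rank[OF R])
  show "finite (choice_rows A P \<alpha>)"
    using finite_partition_gic_users[OF P] by (rule finite_choice_rows)
  show "\<forall>v\<in>choice_rows A P \<alpha>. \<forall>i. v i \<in> carrier R"
    using valid unfolding valid_choice_def choice_rows_def by blast
  show "finite S"
    using S finite_subset unfolding gic_independent_def by blast
  show "inj_on (\<lambda>x. \<lambda>v\<in>choice_rows A P \<alpha>. vec_dot R m v x) (vecs_on R S)"
  proof (intro inj_onI)
    fix x y
    assume x: "x \<in> vecs_on R S" and y: "y \<in> vecs_on R S"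
      and same: "(\<lambda>v\<in>choice_rows A P \<alpha>. vec_dot R m v x) = (\<lambda>v\<in>choice_rows A P \<alpha>. vec_dot R m v y)"
    have "x i = y i" for i
    proof (cases "i \<in> S")
      case True
      obtain j where j: "j \<in> {1..nU i}" and blind: "A i j \<inter> S = {}"
        using S True unfolding gic_independent_def by blast
      have "(i, j) \<in> gic_users m nU"
        using S True j unfolding gic_independent_def gic_users_def by auto
      then obtain W where W: "W \<in> P" "(i, j) \<in> W"
        using P unfolding partition_on_def by blast
      obtain \<psi> where \<psi>: "\<And>x. \<forall>i'. x i' \<in> carrier R \<Longrightarrow>
          \<psi> (\<lambda>k. if k < part_b A W then vec_dot R m (\<alpha> W k) x else \<zero>)
            (\<lambda>i'. if i' \<in> A i j then x i' else \<zero>) = x i"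
        using valid_choice_decoder[OF valid W] by blast
      have "vec_dot R m (\<alpha> W k) x = vec_dot R m (\<alpha> W k) y" if "k < part_b A W" for k
      proof -
        have "\<alpha> W k \<in> choice_rows A P \<alpha>"
          using W that unfolding choice_rows_def by blast
        then show ?thesis
          using same by (metis restrict_apply')
      qed
      then have codeword: "(\<lambda>k. if k < part_b A W then vec_dot R m (\<alpha> W k) x else \<zero>)
          = (\<lambda>k. if k < part_b A W then vec_dot R m (\<alpha> W k) y else \<zero>)"
        by auto
      have side: "(\<lambda>i'. if i' \<in> A i j then x i' else \<zero>) = (\<lambda>i'. if i' \<in> A i j then y i' else \<zero>)"
        using x y blind by (auto simp: vecs_on_def fun_eq_iff disjoint_iff)
      show ?thesis
        using \<psi>[of x] \<psi>[of y] x y unfolding codeword side by (simp add: vecs_on_def)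
    next
      case False
      then show ?thesis
        using x y by (simp add: vecs_on_def)
    qed
    then show "x = y" ..
  qed
qed

definition k2_index :: "nat \<Rightarrow> nat \<Rightarrow> nat \<Rightarrow> nat" where
  "k2_index k a b = (a - 1) * k + b - a * (a + 1) div 2"

definition k2_edges :: "nat \<Rightarrow> (nat \<times> nat) set" where
  "k2_edges k = {(a, b). 1 \<le> a \<and> a < b \<and> b \<le> k}"

lemma triangle_le: "1 \<le> a \<Longrightarrow> a \<le> k \<Longrightarrow> a * (a + 1) div 2 \<le> (a - 1) * k + (a::nat)"
proof -
  assume a: "1 \<le> a" "a \<le> k"
  have "a * (a + 1) \<le> 2 * (a * a)"
    using a by (simp add: algebra_simps)
  then have "a * (a + 1) div 2 \<le> a * a"
    by linarith
  also have "a * a = (a - 1) * a + a"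
    using a by (cases a) auto
  also have "\<dots> \<le> (a - 1) * k + a"
    using a by simp
  finally show ?thesis .
qed

lemma k2_index_eq_start_plus:
  "1 \<le> a \<Longrightarrow> a \<le> b \<Longrightarrow> a \<le> k \<Longrightarrow> k2_index k a b = k2_index k a a + (b - a)"
  unfolding k2_index_def using triangle_le[of a k] by simp

lemma k2_index_start_1: "k2_index k 1 1 = 0"
  by (simp add: k2_index_def)

lemma k2_index_start_Suc:
  assumes "1 \<le> a" "a < k"
  shows "k2_index k (Suc a) (Suc a) = k2_index k a a + (k - a)"
proof -
  have "Suc a * (Suc a + 1) div 2 = a * (a + 1) div 2 + Suc a"
  proof -
    have "Suc a * (Suc a + 1) = a * (a + 1) + 2 * Suc a" by (simp add: algebra_simps)
    then show ?thesis by simp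
  qed
  moreover have "(Suc a - 1) * k = (a - 1) * k + k"
    using assms by (cases a) auto
  ultimately show ?thesis
    unfolding k2_index_def using triangle_le[of a k] assms by simp
qed

lemma k2_index_start_k: "k2_index k k k = k2_m k"
proof -
  have "2 * (k * (k + 1) div 2) = k * k + k" "2 * (k * (k - 1) div 2) = k * k - k" "k \<le> k * k"
    by (cases k; simp add: algebra_simps)+
  moreover have "k2_index k k k = k * k - k * (k + 1) div 2"
    by (cases k) (auto simp: k2_index_def algebra_simps)
  ultimately show ?thesis
    unfolding k2_m_def by linarith
qed

lemma k2_index_start_mono:
  assumes "1 \<le> a" "a \<le> a'" "a' \<le> k"
  shows "k2_index k a a \<le> k2_index k a' a'"
  using assms
proof (induction a')
  case (Suc a')
  then show ?case
    by (cases "a \<le> a'") (auto simp: k2_index_start_Suc le_Suc_eq)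
qed simp

lemma k2_index_between_starts:
  assumes "(a, b) \<in> k2_edges k"
  shows "k2_index k a a < k2_index k a b" "k2_index k a b \<le> k2_index k (Suc a) (Suc a)"
  using assms k2_index_eq_start_plus[of a b k] k2_index_start_Suc[of a k]
  by (auto simp: k2_edges_def)

lemma k2_index_inj: "inj_on (\<lambda>(a, b). k2_index k a b) (k2_edges k)"
proof (intro inj_onI, clarify)
  fix a b a' b'
  assume e: "(a, b) \<in> k2_edges k" and e': "(a', b') \<in> k2_edges k"
    and eq: "k2_index k a b = k2_index k a' b'"
  have "\<not> a < a'" if "(a, b) \<in> k2_edges k" "(a', b') \<in> k2_edges k"
    and "k2_index k a b = k2_index k a' b'" for a b a' b'
  proof
    assume "a < a'"
    have "k2_index k a b \<le> k2_index k (Suc a) (Suc a)"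
      using k2_index_between_starts(2)[OF that(1)] .
    also have "\<dots> \<le> k2_index k a' a'"
      using that(1,2) \<open>a < a'\<close> by (intro k2_index_start_mono) (auto simp: k2_edges_def)
    also have "\<dots> < k2_index k a' b'"
      using k2_index_between_starts(1)[OF that(2)] .
    finally show False
      using that(3) by simp
  qed
  then have "a = a'"
    using e e' eq by (metis linorder_neqE_nat)
  then show "a = a' \<and> b = b'"
    using e e' eq k2_index_eq_start_plus[of a b k] k2_index_eq_start_plus[of a' b' k]
    by (auto simp: k2_edges_def)
qed

lemma k2_index_range:
  assumes "(a, b) \<in> k2_edges k"
  shows "k2_index k a b \<in> {1..k2_m k}"
proof -
  have "k2_index k a b \<le> k2_index k (Suc a) (Suc a)"
    using k2_index_between_starts(2)[OF assms] .
  also have "\<dots> \<le> k2_index k k k"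
    using assms by (intro k2_index_start_mono) (auto simp: k2_edges_def)
  finally show ?thesis
    using k2_index_between_starts(1)[OF assms] k2_index_start_k[of k] by simp
qed

lemma k2_index_surj:
  assumes n: "n \<in> {1..k2_m k}"
  shows "\<exists>(a, b)\<in>k2_edges k. n = k2_index k a b"
proof -
  define S where "S = {a \<in> {1..k}. k2_index k a a < n}"
  have "1 \<in> S"
    using n k2_index_start_1[of k] by (cases k) (auto simp: S_def k2_m_def)
  then have "S \<noteq> {}" "finite S"
    by (auto simp: S_def)
  define a where "a = Max S"
  have a: "a \<in> S"
    unfolding a_def using \<open>finite S\<close> \<open>S \<noteq> {}\<close> by (rule Max_in)
  then have "1 \<le> a" "a \<le> k" "k2_index k a a < n"
    by (auto simp: S_def)
  moreover have "a < k"
    using calculation n k2_index_start_k[of k] by (metis atLeastAtMost_iff le_neq_implies_less not_le)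
  moreover have "\<not> k2_index k (Suc a) (Suc a) < n"
  proof
    assume "k2_index k (Suc a) (Suc a) < n"
    then have "Suc a \<in> S"
      using \<open>a < k\<close> by (simp add: S_def)
    then show False
      using Max_ge[OF \<open>finite S\<close>, of "Suc a"] a_def by simp
  qed
  ultimately have "(a, a + (n - k2_index k a a)) \<in> k2_edges k"
    and "n = k2_index k a (a + (n - k2_index k a a))"
    using k2_index_start_Suc[of a k] k2_index_eq_start_plus[of a "a + (n - k2_index k a a)" k]
    by (auto simp: k2_edges_def)
  then show ?thesis
    by blast
qed

lemma k2_index_bij: "bij_betw (\<lambda>(a, b). k2_index k a b) (k2_edges k) {1..k2_m k}"
  unfolding bij_betw_def using k2_index_inj k2_index_range k2_index_surj by fastforce

definition k2_ends :: "nat \<Rightarrow> nat \<Rightarrow> nat \<times> nat" where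
  "k2_ends k = the_inv_into (k2_edges k) (\<lambda>(a, b). k2_index k a b)"

definition k2_lo :: "nat \<Rightarrow> nat \<Rightarrow> nat" where
  "k2_lo k i = fst (k2_ends k i)"

definition k2_hi :: "nat \<Rightarrow> nat \<Rightarrow> nat" where
  "k2_hi k i = snd (k2_ends k i)"

lemma k2_ends_in_edges:
  assumes "i \<in> {1..k2_m k}"
  shows "(k2_lo k i, k2_hi k i) \<in> k2_edges k" "k2_index k (k2_lo k i) (k2_hi k i) = i"
proof -
  have "k2_ends k i \<in> k2_edges k" "(\<lambda>(a, b). k2_index k a b) (k2_ends k i) = i"
    using k2_index_bij[of k] assms unfolding k2_ends_def bij_betw_def
    by (auto intro: the_inv_into_into f_the_inv_into_f)
  then show "(k2_lo k i, k2_hi k i) \<in> k2_edges k" "k2_index k (k2_lo k i) (k2_hi k i) = i"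
    by (auto simp: k2_lo_def k2_hi_def split: prod.splits)
qed

lemma k2_lo_hi:
  assumes "i \<in> {1..k2_m k}"
  shows "1 \<le> k2_lo k i" "k2_lo k i < k2_hi k i" "k2_hi k i \<le> k"
  using k2_ends_in_edges(1)[OF assms] by (auto simp: k2_edges_def)

lemma k2_lo_hi_index:
  assumes "(a, b) \<in> k2_edges k"
  shows "k2_lo k (k2_index k a b) = a" "k2_hi k (k2_index k a b) = b"
proof -
  have "k2_ends k (k2_index k a b) = (a, b)"
    using k2_index_inj assms unfolding k2_ends_def by (metis (mono_tags) case_prod_conv the_inv_into_f_f)
  then show "k2_lo k (k2_index k a b) = a" "k2_hi k (k2_index k a b) = b"
    by (auto simp: k2_lo_def k2_hi_def)
qed

lemma k2_packet_eqI:
  assumes "i \<in> {1..k2_m k}" "i' \<in> {1..k2_m k}" "k2_lo k i = k2_lo k i'" "k2_hi k i = k2_hi k i'"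
  shows "i = i'"
  using k2_ends_in_edges(2)[OF assms(1)] k2_ends_in_edges(2)[OF assms(2)] assms(3,4) by metis

lemma k2_I1_image:
  assumes "1 \<le> l" "l \<le> k"
  shows "k2_I1 k l = k2_index k l ` {l<..k}"
proof -
  have "l * (l - 1) div 2 + l = l * (l + 1) div 2"
  proof -
    have "l * (l + 1) = l * (l - 1) + 2 * l"
      by (cases l) (auto simp: algebra_simps)
    then have "l * (l + 1) div 2 = (l * (l - 1) + 2 * l) div 2"
      by (simp only:)
    also have "\<dots> = l * (l - 1) div 2 + l"
      by simp
    finally show ?thesis by simp
  qed
  then have "(l - 1) * k + a - l * (l - 1) div 2 = k2_index k l (l + a)" for a
    using triangle_le[OF assms] unfolding k2_index_def by linarith
  then have "k2_I1 k l = (\<lambda>a. k2_index k l (l + a)) ` {1..k - l}"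
    by (auto simp: k2_I1_def)
  also have "\<dots> = k2_index k l ` ((+) l ` {1..k - l})"
    by (simp only: image_image)
  also have "(+) l ` {1..k - l} = {l<..k}"
    using assms by (simp add: image_add_atLeastAtMost atLeastSucAtMost_greaterThanAtMost)
  finally show ?thesis .
qed

lemma k2_I2_image: "k2_I2 k l = (\<lambda>a. k2_index k a l) ` {1..<l}"
proof (cases "l = 1")
  case False
  then have "{a. 1 \<le> a \<and> a \<le> l - 1} = {1..<l}"
    by auto
  then show ?thesis
    using False by (simp add: k2_I2_def k2_index_def setcompr_eq_image)
qed (simp add: k2_I2_def)

lemma k2_I1_eq:
  assumes "1 \<le> l" "l \<le> k"
  shows "k2_I1 k l = {i \<in> {1..k2_m k}. k2_lo k i = l}"
proof -
  have "i \<in> k2_index k l ` {l<..k}" if "i \<in> {1..k2_m k}" "k2_lo k i = l" for i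
    using k2_ends_in_edges[OF that(1)] that(2) by (force simp: k2_edges_def)
  moreover have "k2_index k l b \<in> {1..k2_m k}" "k2_lo k (k2_index k l b) = l" if "b \<in> {l<..k}" for b
    using that assms k2_index_range k2_lo_hi_index by (auto simp: k2_edges_def)
  ultimately show ?thesis
    unfolding k2_I1_image[OF assms] by blast
qed

lemma k2_I2_eq:
  assumes "1 \<le> l" "l \<le> k"
  shows "k2_I2 k l = {i \<in> {1..k2_m k}. k2_hi k i = l}"
proof -
  have "i \<in> (\<lambda>a. k2_index k a l) ` {1..<l}" if "i \<in> {1..k2_m k}" "k2_hi k i = l" for i
    using k2_ends_in_edges[OF that(1)] that(2) by (force simp: k2_edges_def)
  moreover have "k2_index k a l \<in> {1..k2_m k}" "k2_hi k (k2_index k a l) = l" if "a \<in> {1..<l}" for a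
    using that assms k2_index_range k2_lo_hi_index by (auto simp: k2_edges_def)
  ultimately show ?thesis
    unfolding k2_I2_image by blast
qed

definition k2_star :: "nat \<Rightarrow> nat \<Rightarrow> nat set" where
  "k2_star k v = {i \<in> {1..k2_m k}. k2_lo k i = v \<or> k2_hi k i = v}"

definition k2_vertex :: "nat \<Rightarrow> nat \<Rightarrow> nat \<Rightarrow> nat" where
  "k2_vertex k i j = (if j = 1 then k2_lo k i else k2_hi k i)"

lemma k2_users_iff: "(i, j) \<in> gic_users (k2_m k) k2_nU \<longleftrightarrow> i \<in> {1..k2_m k} \<and> j \<in> {1, 2}"
  by (auto simp: gic_users_def k2_nU_def)

lemma k2_star_subset: "k2_star k v \<subseteq> {1..k2_m k}"
  by (auto simp: k2_star_def)

lemma finite_k2_star [simp]: "finite (k2_star k v)"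
  using k2_star_subset finite_subset by blast

lemma k2_vertex_star:
  assumes "i \<in> {1..k2_m k}"
  shows "i \<in> k2_star k (k2_vertex k i j)" "k2_vertex k i j \<in> {1..k}"
  using assms k2_lo_hi[OF assms] by (auto simp: k2_star_def k2_vertex_def)

lemma k2_A_eq:
  assumes "(i, j) \<in> gic_users (k2_m k) k2_nU"
  shows "k2_A k i j = k2_star k (k2_vertex k i j) - {i}"
proof -
  have i: "i \<in> {1..k2_m k}" and j: "j \<in> {1, 2}"
    using assms by (auto simp: k2_users_iff)
  have I1: "i \<in> k2_I1 k l \<longleftrightarrow> l = k2_lo k i" and I2: "i \<in> k2_I2 k l \<longleftrightarrow> l = k2_hi k i"
    if "l \<in> {1..k}" for l
    using that i by (auto simp: k2_I1_eq k2_I2_eq)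
  have "(THE l. l \<in> {1..k} \<and> i \<in> k2_Ij j k l) = k2_vertex k i j"
  proof (rule the_equality)
    have "k2_lo k i \<in> {1..k}" "k2_hi k i \<in> {1..k}"
      using k2_lo_hi[OF i] by auto
    then show "k2_vertex k i j \<in> {1..k} \<and> i \<in> k2_Ij j k (k2_vertex k i j)"
      using I1 I2 by (simp add: k2_Ij_def k2_vertex_def)
  next
    fix l
    assume "l \<in> {1..k} \<and> i \<in> k2_Ij j k l"
    then show "l = k2_vertex k i j"
      using I1 I2 by (auto simp: k2_Ij_def k2_vertex_def)
  qed
  moreover have "k2_I k l = k2_star k l" if "l \<in> {1..k}" for l
    using that by (auto simp: k2_I_def k2_I1_eq k2_I2_eq k2_star_def)
  ultimately show ?thesis
    using k2_vertex_star(2)[OF i] by (simp add: k2_A_def)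
qed

lemma k2_stars_containing:
  assumes "i \<in> {1..k2_m k}"
  shows "{v. i \<in> k2_star k v} = {k2_lo k i, k2_hi k i}"
  using assms by (auto simp: k2_star_def)

lemma card_k2_star_Int_le:
  assumes "u \<noteq> w"
  shows "card (k2_star k u \<inter> k2_star k w) \<le> 1"
proof -
  have ends: "k2_lo k i = min u w \<and> k2_hi k i = max u w" if "i \<in> k2_star k u \<inter> k2_star k w" for i
  proof -
    have "i \<in> {1..k2_m k}" "(k2_lo k i = u \<or> k2_hi k i = u) \<and> (k2_lo k i = w \<or> k2_hi k i = w)"
      using that by (auto simp: k2_star_def)
    then show ?thesis
      using k2_lo_hi(2)[of i k] assms by (auto simp: min_def max_def)
  qed
  have "i = i'" if "i \<in> k2_star k u \<inter> k2_star k w" "i' \<in> k2_star k u \<inter> k2_star k w" for i i'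
  proof (rule k2_packet_eqI)
    show "i \<in> {1..k2_m k}" "i' \<in> {1..k2_m k}"
      using that k2_star_subset[of k u] by blast+
    show "k2_lo k i = k2_lo k i'" "k2_hi k i = k2_hi k i'"
      using ends[OF that(1)] ends[OF that(2)] by simp_all
  qed
  then show ?thesis
    by (simp add: card_le_Suc0_iff_eq)
qed

lemma card_k2_star_1:
  assumes "2 \<le> k"
  shows "card (k2_star k 1) = k - 1"
proof -
  have "k2_hi k i \<noteq> 1" if "i \<in> {1..k2_m k}" for i
    using k2_lo_hi[OF that] by simp
  then have "k2_star k 1 = {i \<in> {1..k2_m k}. k2_lo k i = 1}"
    unfolding k2_star_def by blast
  also have "\<dots> = k2_I1 k 1"
    using assms by (simp add: k2_I1_eq)
  also have "\<dots> = k2_index k 1 ` {1<..k}"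
    using assms by (simp add: k2_I1_image)
  finally have "k2_star k 1 = k2_index k 1 ` {1<..k}" .
  moreover have "inj_on (k2_index k 1) {1<..k}"
  proof (rule inj_onI)
    fix b b'
    assume "b \<in> {1<..k}" "b' \<in> {1<..k}" "k2_index k 1 b = k2_index k 1 b'"
    then show "b = b'"
      using inj_onD[OF k2_index_inj[of k], of "(1, b)" "(1, b')"] by (auto simp: k2_edges_def)
  qed
  ultimately show ?thesis
    by (simp add: card_image)
qed

lemma k2_star_1_independent: "gic_independent (k2_m k) k2_nU (k2_A k) (k2_star k 1)"
  unfolding gic_independent_def
proof (intro conjI ballI)
  show "k2_star k 1 \<subseteq> {1..k2_m k}"
    by (rule k2_star_subset)
  fix i
  assume i: "i \<in> k2_star k 1"
  then have im: "i \<in> {1..k2_m k}"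
    using k2_star_subset by blast
  have "k2_A k i 2 \<inter> k2_star k 1 = {}"
  proof (intro equals0I)
    fix i'
    assume "i' \<in> k2_A k i 2 \<inter> k2_star k 1"
    then have i': "i' \<in> k2_star k (k2_hi k i)" "i' \<noteq> i" "i' \<in> k2_star k 1"
      using k2_A_eq[of i 2 k] im by (auto simp: k2_users_iff k2_vertex_def)
    have "i' \<in> {1..k2_m k}"
      using i'(3) k2_star_subset by blast
    then show False
      using i i' im k2_lo_hi[OF im] k2_lo_hi[of i' k] k2_packet_eqI[OF im, of i']
      by (auto simp: k2_star_def)
  qed
  then show "\<exists>j\<in>{1..k2_nU i}. k2_A k i j \<inter> k2_star k 1 = {}"
    by (auto simp: k2_nU_def)
qed

definition k2_vertex_rows :: "nat \<Rightarrow> nat \<Rightarrow> nat set" where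
  "k2_vertex_rows k kk = (if kk < k - 1 then k2_star k (Suc kk) else {})"

lemma card_k2_stars_containing:
  assumes "i \<in> {1..k2_m k}"
  shows "card {v\<in>{1..k}. i \<in> k2_star k v} = 2"
proof -
  have "{v\<in>{1..k}. i \<in> k2_star k v} = {k2_lo k i, k2_hi k i}"
    using k2_stars_containing[OF assms] k2_lo_hi[OF assms] by auto
  then show ?thesis
    using k2_lo_hi(2)[OF assms] by simp
qed

lemma k2_vertex_rows_decodable:
  "parity_decodable (k2_m k) (k2_A k) (gic_users (k2_m k) k2_nU) (k - 1) (k2_vertex_rows k)"
proof (rule parity_decodableI)
  fix i j
  assume user: "(i, j) \<in> gic_users (k2_m k) k2_nU"
  define v where "v = k2_vertex k i j"
  have i: "i \<in> {1..k2_m k}"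
    using user by (simp add: k2_users_iff)
  have v: "v \<in> {1..k}" "i \<in> k2_star k v" and A: "k2_A k i j = k2_star k v - {i}"
    using k2_vertex_star[OF i] k2_A_eq[OF user] by (simp_all add: v_def)
  have side: "of_bool (i' \<in> k2_star k v - {i}) + of_bool (i' = i) = (of_bool (i' \<in> k2_star k v) :: nat)" for i'
    using v(2) by auto
  show "\<exists>K\<subseteq>{..<k - 1}. \<exists>Z\<subseteq>k2_A k i j. parity_recovers (k2_m k) (k2_vertex_rows k) K Z i"
  proof (cases "v < k")
    case True
    have "{kk\<in>{v - 1}. i' \<in> k2_vertex_rows k kk} = (if i' \<in> k2_star k v then {v - 1} else {})" for i'
      using True v(1) by (auto simp: k2_vertex_rows_def)
    then have "parity_recovers (k2_m k) (k2_vertex_rows k) {v - 1} (k2_star k v - {i}) i"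
      unfolding parity_recovers_def using side by (simp add: add.assoc)
    moreover have "{v - 1} \<subseteq> {..<k - 1}"
      using True v(1) by auto
    ultimately show ?thesis
      unfolding A by (intro exI[of _ "{v - 1}"] exI[of _ "k2_star k v - {i}"] conjI order_refl)
  next
    case False
    then have "v = k"
      using v(1) by simp
    have "even (card {kk\<in>{..<k - 1}. i' \<in> k2_vertex_rows k kk} + of_bool (i' \<in> k2_star k v))"
      if "i' \<in> {1..k2_m k}" for i'
    proof -
      have "Suc ` {kk\<in>{..<k - 1}. i' \<in> k2_vertex_rows k kk} = {v'\<in>{1..<k}. i' \<in> k2_star k v'}"
        using v(1) by (auto simp: k2_vertex_rows_def image_iff Suc_le_eq gr0_conv_Suc)
      then have "card {kk\<in>{..<k - 1}. i' \<in> k2_vertex_rows k kk} = card {v'\<in>{1..<k}. i' \<in> k2_star k v'}"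
        using card_image[of Suc "{kk\<in>{..<k - 1}. i' \<in> k2_vertex_rows k kk}"] by simp
      moreover have "{v'\<in>{1..k}. i' \<in> k2_star k v'}
          = {v'\<in>{1..<k}. i' \<in> k2_star k v'} \<union> (if i' \<in> k2_star k k then {k} else {})"
        using v(1) by (auto simp: order.order_iff_strict)
      then have "card {v'\<in>{1..k}. i' \<in> k2_star k v'}
          = card {v'\<in>{1..<k}. i' \<in> k2_star k v'} + of_bool (i' \<in> k2_star k k)"
        by (simp only:, subst card_Un_disjoint) auto
      ultimately have "card {kk\<in>{..<k - 1}. i' \<in> k2_vertex_rows k kk} + of_bool (i' \<in> k2_star k k)
          = card {v'\<in>{1..k}. i' \<in> k2_star k v'}"
        by simp
      then show ?thesis
        using card_k2_stars_containing[OF that] \<open>v = k\<close> by simp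
    qed
    then have "parity_recovers (k2_m k) (k2_vertex_rows k) {..<k - 1} (k2_star k v - {i}) i"
      unfolding parity_recovers_def using side by (simp add: add.assoc)
    then show ?thesis
      unfolding A by (intro exI[of _ "{..<k - 1}"] exI[of _ "k2_star k v - {i}"] conjI order_refl)
  qed
qed

lemma k2_sum_card_star_le:
  assumes Y: "Y \<subseteq> {1..k2_m k}" and V: "finite V"
  shows "(\<Sum>v\<in>V. card (Y \<inter> k2_star k v)) \<le> 2 * card Y"
proof -
  have finY: "finite Y"
    using Y finite_subset by blast
  have "(\<Sum>v\<in>V. card (Y \<inter> k2_star k v)) = (\<Sum>v\<in>V. \<Sum>i\<in>Y. of_bool (i \<in> k2_star k v))"
    using finY by (simp add: Int_def)
  also have "\<dots> = (\<Sum>i\<in>Y. card {v\<in>V. i \<in> k2_star k v})"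
    using V by (subst sum.swap) (simp add: Int_def)
  also have "\<dots> \<le> (\<Sum>i\<in>Y. card {k2_lo k i, k2_hi k i})"
  proof (rule sum_mono)
    fix i
    assume "i \<in> Y"
    then have "{v\<in>V. i \<in> k2_star k v} \<subseteq> {k2_lo k i, k2_hi k i}"
      using Y k2_stars_containing by blast
    then show "card {v\<in>V. i \<in> k2_star k v} \<le> card {k2_lo k i, k2_hi k i}"
      by (rule card_mono[rotated]) simp
  qed
  also have "\<dots> \<le> (\<Sum>i\<in>Y. 2)"
    by (rule sum_mono) (simp add: card_insert_if)
  finally show ?thesis
    by simp
qed

lemma k2_card_vertices_add_le:
  assumes Y: "Y \<subseteq> {1..k2_m k}" and V: "finite V" "V \<noteq> {}" and c: "2 \<le> c"
    and deg: "\<And>v. v \<in> V \<Longrightarrow> c + 1 \<le> card (Y \<inter> k2_star k v)"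
  shows "card V + c \<le> card Y"
proof -
  have finY: "finite Y"
    using Y finite_subset by blast
  have "card V \<noteq> 0"
    using V by simp
  then consider "card V = 1" | "card V = 2" | "3 \<le> card V"
    by linarith
  then show ?thesis
  proof cases
    case 1
    then obtain v where "V = {v}"
      using card_1_singletonE by blast
    then have "c + 1 \<le> card (Y \<inter> k2_star k v)"
      using deg by simp
    also have "\<dots> \<le> card Y"
      using finY by (intro card_mono) auto
    finally show ?thesis
      using 1 by simp
  next
    case 2
    then obtain u w where uw: "V = {u, w}" "u \<noteq> w"
      by (meson card_2_iff)
    have "card (Y \<inter> k2_star k u) + card (Y \<inter> k2_star k w)
        = card (Y \<inter> k2_star k u \<union> Y \<inter> k2_star k w) + card (Y \<inter> k2_star k u \<inter> (Y \<inter> k2_star k w))"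
      using finY by (intro card_Un_Int) auto
    also have "\<dots> \<le> card Y + card (k2_star k u \<inter> k2_star k w)"
      using finY by (intro add_mono card_mono) auto
    also have "\<dots> \<le> card Y + 1"
      using card_k2_star_Int_le[OF uw(2)] by simp
    moreover have "c + 1 \<le> card (Y \<inter> k2_star k u)" "c + 1 \<le> card (Y \<inter> k2_star k w)"
      using deg uw(1) by auto
    ultimately show ?thesis
      using 2 c by linarith
  next
    case 3
    have "card V * (c + 1) \<le> (\<Sum>v\<in>V. card (Y \<inter> k2_star k v))"
      using sum_bounded_below[of V "c + 1"] deg by (simp add: mult.commute)
    also have "\<dots> \<le> 2 * card Y"
      by (rule k2_sum_card_star_le[OF Y V(1)])
    finally have "card V * (c + 1) \<le> 2 * card Y" .
    moreover obtain p q where "card V = p + 3" "c = q + 2"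
      using 3 c by (metis add.commute le_iff_add)
    ultimately show ?thesis
      by (simp add: algebra_simps)
  qed
qed

lemma k2_vertex_parity_group_code:
  assumes W: "W \<subseteq> gic_users (k2_m k) k2_nU" "W \<noteq> {}" and c: "2 \<le> part_c (k2_A k) W"
  defines "vs \<equiv> sorted_list_of_set ((\<lambda>(i, j). k2_vertex k i j) ` W)"
  shows "parity_group_code (k2_m k) (k2_A k) W (\<lambda>kk. part_Y W \<inter> k2_star k (vs ! kk))"
proof -
  define Y where "Y = part_Y W"
  define V where "V = (\<lambda>(i, j). k2_vertex k i j) ` W"
  have finW: "finite W"
    using W(1) finite_gic_users finite_subset by blast
  have Y: "Y \<subseteq> {1..k2_m k}"
    unfolding Y_def using W(1) by (rule part_Y_subset)
  have user_facts: "i \<in> Y \<inter> k2_star k (k2_vertex k i j)"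
    "k2_A k i j = k2_star k (k2_vertex k i j) - {i}" if "(i, j) \<in> W" for i j
  proof -
    have "(i, j) \<in> gic_users (k2_m k) k2_nU"
      using that W(1) by blast
    then show "k2_A k i j = k2_star k (k2_vertex k i j) - {i}"
      by (rule k2_A_eq)
    show "i \<in> Y \<inter> k2_star k (k2_vertex k i j)"
      using that Y k2_vertex_star(1) unfolding Y_def part_Y_def by blast
  qed
  have deg: "part_c (k2_A k) W + 1 \<le> card (Y \<inter> k2_star k v)" if v: "v \<in> V" for v
  proof -
    obtain i j where ij: "(i, j) \<in> W" "v = k2_vertex k i j"
      using v unfolding V_def by auto
    have "part_c (k2_A k) W \<le> card (k2_A k i j \<inter> Y)"
      unfolding Y_def using finW ij(1) by (rule part_c_le)
    also have "k2_A k i j \<inter> Y = Y \<inter> k2_star k v - {i}"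
      using user_facts[OF ij(1)] ij(2) by auto
    also have "card \<dots> = card (Y \<inter> k2_star k v) - 1"
      using user_facts(1)[OF ij(1)] ij(2) by simp
    finally show ?thesis
      using user_facts(1)[OF ij(1)] ij(2) by (metis Nat.le_diff_conv2 card_0_eq empty_iff finite_Int finite_k2_star less_one not_le)
  qed
  have "card V + part_c (k2_A k) W \<le> card Y"
    using Y c deg W(2) finW unfolding V_def by (intro k2_card_vertices_add_le) auto
  then have len: "length vs \<le> part_b (k2_A k) W"
    using finW by (simp add: vs_def V_def[symmetric] Y_def part_b_def)
  have set_vs: "set vs = V"
    using finW by (simp add: vs_def V_def)
  have "parity_decodable (k2_m k) (k2_A k) W (part_b (k2_A k) W) (\<lambda>kk. Y \<inter> k2_star k (vs ! kk))"
  proof (rule parity_decodableI)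
    fix i j
    assume ij: "(i, j) \<in> W"
    define v where "v = k2_vertex k i j"
    have "v \<in> set vs"
      using ij unfolding set_vs V_def v_def by force
    then obtain n where n: "n < length vs" "vs ! n = v"
      by (auto simp: in_set_conv_nth)
    have "{kk\<in>{n}. i' \<in> Y \<inter> k2_star k (vs ! kk)} = (if i' \<in> Y \<inter> k2_star k v then {n} else {})" for i'
      using n by auto
    then have "parity_recovers (k2_m k) (\<lambda>kk. Y \<inter> k2_star k (vs ! kk)) {n} (Y \<inter> k2_star k v - {i}) i"
      using user_facts(1)[OF ij] unfolding parity_recovers_def v_def by auto
    moreover have "{n} \<subseteq> {..<part_b (k2_A k) W}" "Y \<inter> k2_star k v - {i} \<subseteq> k2_A k i j"
      using n len user_facts(2)[OF ij] unfolding v_def by auto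
    ultimately show "\<exists>K\<subseteq>{..<part_b (k2_A k) W}. \<exists>Z\<subseteq>k2_A k i j.
        parity_recovers (k2_m k) (\<lambda>kk. Y \<inter> k2_star k (vs ! kk)) K Z i"
      by (intro exI[of _ "{n}"] exI[of _ "Y \<inter> k2_star k v - {i}"] conjI)
  qed
  then show ?thesis
    unfolding parity_group_code_def Y_def by auto
qed


lemma k2_m_ge:
  assumes "2 \<le> k"
  shows "2 * k - 3 \<le> k2_m k"
proof -
  obtain j where j: "k = j + 2"
    using assms by (metis add.commute le_iff_add)
  have "2 * (2 * k - 3) \<le> k * (k - 1)"
    using j by (simp add: algebra_simps)
  then show ?thesis
    unfolding k2_m_def by linarith
qed

lemma k2_part_Y_users: "part_Y (gic_users (k2_m k) k2_nU) = {1..k2_m k}"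
  by (auto simp: part_Y_def k2_users_iff)

lemma k2_part_b_users_ge:
  assumes k: "2 \<le> k"
  shows "k - 1 \<le> part_b (k2_A k) (gic_users (k2_m k) k2_nU)"
proof -
  define U where "U = gic_users (k2_m k) k2_nU"
  define i1 where "i1 = k2_index k 1 2"
  have edge: "(1, 2) \<in> k2_edges k"
    using k by (simp add: k2_edges_def)
  then have i1: "i1 \<in> {1..k2_m k}" "k2_lo k i1 = 1"
    unfolding i1_def using k2_index_range k2_lo_hi_index by auto
  then have user: "(i1, 1) \<in> U" and i1_star: "i1 \<in> k2_star k 1"
    by (auto simp: U_def k2_users_iff k2_star_def)
  have "part_c (k2_A k) U \<le> card (k2_A k i1 1 \<inter> part_Y U)"
    using finite_gic_users user unfolding U_def by (rule part_c_le)
  also have "k2_A k i1 1 \<inter> part_Y U = k2_star k 1 - {i1}"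
    using k2_A_eq[of i1 1 k] user i1(2) k2_star_subset[of k 1]
    by (auto simp: U_def k2_part_Y_users k2_vertex_def)
  also have "card (k2_star k 1 - {i1}) = k - 2"
    using card_k2_star_1[OF k] i1_star by simp
  finally show ?thesis
    using k2_m_ge[OF k] unfolding part_b_def U_def[symmetric] k2_part_Y_users[of k, folded U_def]
    by simp
qed

lemma k2_parity_group_code_exists:
  assumes W: "W \<subseteq> gic_users (k2_m k) k2_nU" "W \<noteq> {}"
  shows "\<exists>B. parity_group_code (k2_m k) (k2_A k) W B"
proof -
  have irrefl: "i \<notin> k2_A k i j" if "(i, j) \<in> W" for i j
    using that W(1) k2_A_eq by blast
  consider "part_c (k2_A k) W = 0" | "part_c (k2_A k) W = 1" | "2 \<le> part_c (k2_A k) W"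
    by linarith
  then show ?thesis
  proof cases
    case 1
    show ?thesis
      using uncoded_parity_group_code[OF W(1) 1] by blast
  next
    case 2
    show ?thesis
      using pairing_parity_group_code[OF W(1) 2 irrefl] by blast
  next
    case 3
    show ?thesis
      using k2_vertex_parity_group_code[OF W 3] by blast
  qed
qed

lemma k2_valid_choice_exists:
  assumes P: "partition_on (gic_users (k2_m k) k2_nU) P"
  shows "\<exists>\<alpha>. valid_choice gf2 (k2_m k) (k2_A k) P \<alpha>"
proof -
  have W: "W \<subseteq> gic_users (k2_m k) k2_nU" "W \<noteq> {}" if "W \<in> P" for W
    using P that unfolding partition_on_def by blast+
  define B where "B W = (SOME B. parity_group_code (k2_m k) (k2_A k) W B)" for W
  have "parity_group_code (k2_m k) (k2_A k) W (B W)" if "W \<in> P" for W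
    unfolding B_def using k2_parity_group_code_exists[OF W[OF that]] by (rule someI_ex)
  then show ?thesis
    using W by (blast intro: valid_choice_gf2_if_parity_group_code)
qed

lemma k2_iupm_rate_ge:
  assumes k: "2 \<le> k" and P: "partition_on (gic_users (k2_m k) k2_nU) P"
  shows "k - 1 \<le> iupm_rate (k2_m k) (k2_A k) P"
  unfolding iupm_rate_def
proof (rule cInf_greatest)
  obtain \<alpha> where "valid_choice gf2 (k2_m k) (k2_A k) P \<alpha>"
    using k2_valid_choice_exists[OF P] by blast
  then show "{vec_rank R (k2_m k) (choice_rows (k2_A k) P \<alpha>) |(R :: nat ring) s \<alpha>.
      field R \<and> 1 \<le> s \<and> card (carrier R) = 2 ^ s \<and> valid_choice R (k2_m k) (k2_A k) P \<alpha>} \<noteq> {}"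
    using gf2_field by force
next
  fix r
  assume "r \<in> {vec_rank R (k2_m k) (choice_rows (k2_A k) P \<alpha>) |(R :: nat ring) s \<alpha>.
      field R \<and> 1 \<le> s \<and> card (carrier R) = 2 ^ s \<and> valid_choice R (k2_m k) (k2_A k) P \<alpha>}"
  then obtain R :: "nat ring" and s \<alpha> where r: "r = vec_rank R (k2_m k) (choice_rows (k2_A k) P \<alpha>)"
    and R: "field R" "card (carrier R) = 2 ^ s" and valid: "valid_choice R (k2_m k) (k2_A k) P \<alpha>"
    by blast
  have "finite (carrier R)"
    using R(2) by (metis card_ge_0_finite pos2 zero_less_power)
  then show "k - 1 \<le> r"
    using vec_rank_choice_rows_ge_independent[OF R(1) _ P valid k2_star_1_independent]
      card_k2_star_1[OF k] r by simp
qed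

lemma k2_iupm_rate_users_le:
  assumes k: "2 \<le> k"
  shows "iupm_rate (k2_m k) (k2_A k) {gic_users (k2_m k) k2_nU} \<le> k - 1"
proof -
  define U where "U = gic_users (k2_m k) k2_nU"
  define \<alpha> :: "(nat \<times> nat) set \<Rightarrow> nat \<Rightarrow> nat \<Rightarrow> nat"
    where "\<alpha> = (\<lambda>W kk i. of_bool (i \<in> k2_vertex_rows k kk))"
  have "parity_group_code (k2_m k) (k2_A k) U (k2_vertex_rows k)"
    unfolding parity_group_code_def U_def
    using parity_decodable_mono[OF k2_vertex_rows_decodable k2_part_b_users_ge[OF k]] k2_star_subset
    by (auto simp: k2_part_Y_users k2_vertex_rows_def)
  then have valid: "valid_choice gf2 (k2_m k) (k2_A k) {U} \<alpha>"
    unfolding \<alpha>_def U_def by (intro valid_choice_gf2_if_parity_group_code) auto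
  have rows: "choice_rows (k2_A k) {U} \<alpha> \<subseteq> insert (\<lambda>i. 0) ((\<lambda>kk i. of_bool (i \<in> k2_star k (Suc kk))) ` {..<k - 1})"
  proof
    fix v
    assume "v \<in> choice_rows (k2_A k) {U} \<alpha>"
    then obtain kk where v: "v = \<alpha> U kk"
      unfolding choice_rows_def by blast
    show "v \<in> insert (\<lambda>i. 0) ((\<lambda>kk i. of_bool (i \<in> k2_star k (Suc kk))) ` {..<k - 1})"
    proof (cases "kk < k - 1")
      case True
      then have "v = (\<lambda>i. of_bool (i \<in> k2_star k (Suc kk)))"
        using v by (simp add: \<alpha>_def k2_vertex_rows_def)
      then show ?thesis
        using True by blast
    next
      case False
      then have "v = (\<lambda>i. 0)"
        using v by (simp add: \<alpha>_def k2_vertex_rows_def)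
      then show ?thesis
        by blast
    qed
  qed
  then have "finite (choice_rows (k2_A k) {U} \<alpha>)"
    by (rule finite_subset) simp
  moreover have "\<forall>v\<in>choice_rows (k2_A k) {U} \<alpha>. \<forall>i. v i \<in> carrier gf2"
    by (auto simp: choice_rows_def \<alpha>_def)
  ultimately have "vec_rank gf2 (k2_m k) (choice_rows (k2_A k) {U} \<alpha>) \<le> card (choice_rows (k2_A k) {U} \<alpha> - {\<lambda>i. 0})"
    using vec_rank_le_card_nonzero[OF gf2_field] by simp
  also have "\<dots> \<le> card ((\<lambda>kk i. of_bool (i \<in> k2_star k (Suc kk)) :: nat) ` {..<k - 1})"
    by (rule card_mono) (use rows in auto)
  also have "\<dots> \<le> k - 1"
    using card_image_le[of "{..<k - 1}"] by simp
  finally have "vec_rank gf2 (k2_m k) (choice_rows (k2_A k) {U} \<alpha>) \<le> k - 1" .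
  moreover have "iupm_rate (k2_m k) (k2_A k) {U} \<le> vec_rank gf2 (k2_m k) (choice_rows (k2_A k) {U} \<alpha>)"
    unfolding iupm_rate_def using gf2_field valid by (intro cInf_lower) force+
  ultimately show ?thesis
    unfolding U_def by simp
qed

lemma k2_beta_iupm:
  assumes k: "2 \<le> k"
  shows "beta_iupm (k2_m k) k2_nU (k2_A k) = k - 1"
  unfolding beta_iupm_def
proof (rule antisym)
  define U where "U = gic_users (k2_m k) k2_nU"
  have "(1, 1) \<in> U"
    using k2_m_ge[OF k] k by (simp add: U_def k2_users_iff)
  then have "U \<noteq> {}"
    by blast
  then have "partition_on U {U}" "card {U} \<le> k2_m k"
    using k2_m_ge[OF k] k by (auto intro: partition_on_space)
  then show "Inf {iupm_rate (k2_m k) (k2_A k) P |P. partition_on U P \<and> card P \<le> k2_m k} \<le> k - 1"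
    using k2_iupm_rate_users_le[OF k, folded U_def]
    by (intro cInf_lower2[of "iupm_rate (k2_m k) (k2_A k) {U}"]) auto
  show "k - 1 \<le> Inf {iupm_rate (k2_m k) (k2_A k) P |P. partition_on U P \<and> card P \<le> k2_m k}"
    using \<open>partition_on U {U}\<close> \<open>card {U} \<le> k2_m k\<close> k2_iupm_rate_ge[OF k]
    unfolding U_def by (intro cInf_greatest) blast+
qed

lemma k2_gic_beta:
  assumes k: "2 \<le> k"
  shows "gic_beta (k2_m k) k2_nU (k2_A k) = k - 1"
  unfolding gic_beta_def
proof (rule cInf_eq_minimum)
  have "has_index_code (k2_m k) k2_nU (k2_A k) 1 (k - 1)"
    by (rule has_index_code_if_parity_decodable[OF k2_vertex_rows_decodable])
  then show "real (k - 1) \<in> {real r / real t |r t. 0 < t \<and> has_index_code (k2_m k) k2_nU (k2_A k) t r}"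
    by force
next
  fix q
  assume "q \<in> {real r / real t |r t. 0 < t \<and> has_index_code (k2_m k) k2_nU (k2_A k) t r}"
  then obtain r t where q: "q = real r / real t" "0 < t" and code: "has_index_code (k2_m k) k2_nU (k2_A k) t r"
    by blast
  have "(k - 1) * t \<le> r"
    using index_code_length_ge_independent[OF code k2_star_1_independent] card_k2_star_1[OF k] by simp
  then have "real (k - 1) * real t \<le> real r"
    by (metis of_nat_le_iff of_nat_mult)
  then show "real (k - 1) \<le> q"
    using q by (simp add: pos_le_divide_eq)
qed

theorem proposition4:
  fixes k :: nat
  assumes "2 \<le> k"
  shows "real (beta_iupm (k2_m k) k2_nU (k2_A k)) = gic_beta (k2_m k) k2_nU (k2_A k)"
  using k2_beta_iupm[OF assms] k2_gic_beta[OF assms] by simp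

end
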